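(* Let $\Theta_1,\Theta_2$ be i.i.d. uniformly distributed directions on the unit sphere $S^{d-1}$. Let $t_1,t_2\ge0$ be deterministic with $t_1,t_2\le R_n$. Let $X_i\in B_d^{(\zeta)}$ be the point with $d(0,X_i)=R_n-t_i$ and direction $\Theta_i$, for $i=1,2$. Set $\omega_n=\log\log R_n$. Then, as $n\to\infty$, $$\mathbb P\bigl(d(X_1,X_2)\le R_n\bigr)\sim\frac{2^{d-1}}{(d-1)\kappa_{d-2}}\,e^{-\zeta(d-1)(R_n-t_1-t_2)/2},$$ uniformly on $\{(t_1,t_2):t_1+t_2\le R_n-\omega_n\}$.
   Context: Fix an integer $d\ge2$ and $\zeta>0$. The Poincaré ball $B_d^{(\zeta)}$ is the open unit ball in $\mathbb R^d$ with Riemannian metric $ds^2=\frac{4}{\zeta^2}\frac{|dx|^2}{(1-|x|^2)^2}$. The symbol $d(\cdot,\cdot)$ denotes the induced hyperbolic distance, so $d(0,x)=\zeta^{-1}\log\frac{1+|x|}{1-|x|}$. Points are described in hyperbolic polar coordinates: the radial part is $d(0,x)$ and the angular part is the direction $x/|x|\in S^{d-1}$. Let $\kappa_m=\int_0^\pi\sin^m\theta\,d\theta$. $R_n$ is a deterministic sequence with $R_n\to\infty$. The notation $a_n\sim b_n$ means $a_n/b_n\to1$. *)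

theory Defs
  imports "HOL-Probability.Probability"
begin

text \<open>Hyperbolic distance in the Poincare ball model with metric
  ds^2 = (4/zeta^2) |dx|^2 / (1-|x|^2)^2 (curvature -zeta^2).\<close>
definition hyp_dist :: "real \<Rightarrow> 'a::euclidean_space \<Rightarrow> 'a \<Rightarrow> real" where
  "hyp_dist \<zeta> x y =
     arcosh (1 + 2 * (norm (x - y))\<^sup>2 / ((1 - (norm x)\<^sup>2) * (1 - (norm y)\<^sup>2))) / \<zeta>"

text \<open>The point of the ball with hyperbolic radial part rho (i.e. hyp_dist zeta 0 x = rho)
  and angular part theta (a unit vector): its Euclidean norm r solves
  rho = zeta^-1 log((1+r)/(1-r)), i.e. r = tanh(zeta rho / 2).\<close>
definition hyp_point :: "real \<Rightarrow> real \<Rightarrow> 'a::euclidean_space \<Rightarrow> 'a" where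
  "hyp_point \<zeta> \<rho> \<theta> = tanh (\<zeta> * \<rho> / 2) *\<^sub>R \<theta>"

text \<open>Uniform (normalized surface) distribution on the unit sphere S^{d-1}:
  the radial projection of the uniform distribution on the unit ball.\<close>
definition unif_sphere :: "'a::euclidean_space measure" where
  "unif_sphere = distr (uniform_measure lborel (ball 0 1)) borel (\<lambda>x. x /\<^sub>R norm x)"

definition kappa :: "nat \<Rightarrow> real" where
  "kappa m = integral {0..pi} (\<lambda>\<theta>. sin \<theta> ^ m)"

end

theory Submission
  imports Defs
begin

text \<open>By the hyperbolic law of cosines, \<open>d(X1, X2) \<le> R\<close> holds exactly when \<open>\<Theta>1 \<bullet> \<Theta>2 \<ge> c\<close> for an
  explicit threshold \<open>c\<close> depending on the two radial parts, and a direct computation gives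
  \<open>1 - c = 2 exp (-\<zeta> (R - t1 - t2)) r\<close> with \<open>r = 1 + O(exp (-\<zeta> \<omega>))\<close> uniformly in \<open>t1 + t2 \<le> R - \<omega>\<close>.
  Conditioning on \<open>\<Theta>1\<close>, the probability is the normalised area of a spherical cap
  \<open>{\<theta>. \<theta> \<bullet> u \<ge> c}\<close>, which is the volume of the cone over the cap divided by that of the unit ball.
  Sandwiching this cone between two right circular cones, whose volumes follow from Fubini, bounds
  the area between \<open>Q s^(d-1) c\<close> and \<open>Q s^(d-1) / c^(d-1)\<close>, where \<open>s = sqrt (1 - c\<^sup>2)\<close> and the
  constant \<open>Q = 1 / ((d - 1) \<kappa>\<^sub>d\<^sub>-\<^sub>2)\<close> comes from the recursion for unit ball volumes. Since \<open>c \<rightarrow> 1\<close>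
  and \<open>s\<^sup>2 = (1 - c)(1 + c) \<sim> 4 exp (-\<zeta> (R - t1 - t2))\<close>, both bounds are asymptotic to the claimed
  value, with an error depending on \<open>exp (-\<zeta> \<omega>)\<close> only.\<close>

section \<open>Cartesian coordinates on a Euclidean space\<close>

text \<open>The library proves that orthogonal maps preserve Lebesgue measure only on \<open>real^'n\<close> with a
  well-ordered index type; these coordinates transfer the result to an arbitrary Euclidean space.\<close>

typedef (overloaded) ('a::euclidean_space) basis_index = "{..<DIM('a)}"
  by (rule exI[of _ 0]) simp

instance basis_index :: (euclidean_space) finite
proof
  have "(UNIV :: 'a basis_index set) = Abs_basis_index ` {..<DIM('a)}"
    using type_definition.Abs_image[OF type_definition_basis_index[where 'a='a]] by simp
  then show "finite (UNIV :: 'a basis_index set)" by (metis finite_imageI finite_lessThan)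
qed

instantiation basis_index :: (euclidean_space) linorder
begin
definition less_eq_basis_index :: "'a basis_index \<Rightarrow> 'a basis_index \<Rightarrow> bool"
  where "less_eq_basis_index i j \<longleftrightarrow> Rep_basis_index i \<le> Rep_basis_index j"
definition less_basis_index :: "'a basis_index \<Rightarrow> 'a basis_index \<Rightarrow> bool"
  where "less_basis_index i j \<longleftrightarrow> Rep_basis_index i < Rep_basis_index j"
instance
  by standard (auto simp: less_eq_basis_index_def less_basis_index_def Rep_basis_index_inject)
end

instance basis_index :: (euclidean_space) wellorder
proof
  fix P :: "'a basis_index \<Rightarrow> bool" and a
  assume step: "\<And>x. (\<And>y. y < x \<Longrightarrow> P y) \<Longrightarrow> P x"
  show "P a"
    by (induct a rule: measure_induct_rule[where f=Rep_basis_index])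
       (use step in \<open>auto simp: less_basis_index_def\<close>)
qed

definition basis_enum :: "nat \<Rightarrow> 'a::euclidean_space" where
  "basis_enum = (SOME e. bij_betw e {..<DIM('a)} Basis)"

lemma bij_betw_basis_enum: "bij_betw (basis_enum :: nat \<Rightarrow> 'a::euclidean_space) {..<DIM('a)} Basis"
proof -
  have "\<exists>e. bij_betw e {..<DIM('a)} (Basis::'a set)"
    using ex_bij_betw_nat_finite[of "Basis :: 'a set"] by (simp add: lessThan_atLeast0)
  then show ?thesis unfolding basis_enum_def by (rule someI_ex)
qed

definition basis_vec :: "'a basis_index \<Rightarrow> 'a::euclidean_space" where
  "basis_vec i = basis_enum (Rep_basis_index i)"

lemma bij_basis_vec: "bij_betw (basis_vec :: 'a basis_index \<Rightarrow> 'a::euclidean_space) UNIV Basis"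
proof -
  have "bij_betw (Rep_basis_index :: 'a basis_index \<Rightarrow> nat) UNIV {..<DIM('a)}"
    by (rule bij_betw_imageI)
       (auto simp: inj_on_def Rep_basis_index_inject type_definition.Rep_range[OF type_definition_basis_index])
  from bij_betw_trans[OF this bij_betw_basis_enum] show ?thesis
    by (simp add: basis_vec_def[abs_def] o_def)
qed

lemma inner_basis_vec: "basis_vec i \<bullet> basis_vec j = (if i = j then 1 else 0)"
proof -
  have "basis_vec i \<in> Basis" "basis_vec j \<in> Basis" "basis_vec i = basis_vec j \<longleftrightarrow> i = j"
    using bij_basis_vec by (auto simp: bij_betw_def inj_on_def)
  then show ?thesis by (auto simp: inner_Basis)
qed

lemma sum_basis_vec: "(\<Sum>i\<in>UNIV. f (basis_vec i)) = (\<Sum>b\<in>Basis. f b)"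
  using sum.reindex_bij_betw[OF bij_basis_vec, of f] by simp

lemma prod_basis_vec: "(\<Prod>i\<in>UNIV. f (basis_vec i)) = (\<Prod>b\<in>Basis. f b)"
  using prod.reindex_bij_betw[OF bij_basis_vec, of f] by simp

lemma ball_Basis_iff_basis_vec: "(\<forall>b\<in>Basis. P b) \<longleftrightarrow> (\<forall>i. P (basis_vec i))"
  using bij_betw_imp_surj_on[OF bij_basis_vec] by (metis rangeE rangeI)

definition to_cart :: "'a::euclidean_space \<Rightarrow> real ^ 'a basis_index" where
  "to_cart x = (\<chi> i. x \<bullet> basis_vec i)"

definition from_cart :: "real ^ 'a basis_index \<Rightarrow> 'a::euclidean_space" where
  "from_cart v = (\<Sum>i\<in>UNIV. (v $ i) *\<^sub>R basis_vec i)"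

lemma inner_from_cart_basis_vec: "from_cart v \<bullet> basis_vec j = v $ j"
proof -
  have "from_cart v \<bullet> basis_vec j = (\<Sum>i\<in>UNIV. if i = j then v $ j else 0)"
    unfolding from_cart_def inner_sum_left by (intro sum.cong) (auto simp: inner_basis_vec)
  then show ?thesis by simp
qed

lemma to_cart_from_cart [simp]: "to_cart (from_cart v) = v"
  by (simp add: to_cart_def inner_from_cart_basis_vec vec_eq_iff)

lemma from_cart_to_cart [simp]: "from_cart (to_cart x) = x"
proof -
  have "from_cart (to_cart x) = (\<Sum>i\<in>UNIV. (x \<bullet> basis_vec i) *\<^sub>R basis_vec i)"
    by (simp add: from_cart_def to_cart_def)
  also have "\<dots> = x"
    using sum_basis_vec[of "\<lambda>b. (x \<bullet> b) *\<^sub>R b"] euclidean_representation[of x] by simp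
  finally show ?thesis .
qed

lemma inner_to_cart [simp]: "to_cart x \<bullet> to_cart y = x \<bullet> y"
proof -
  have "to_cart x \<bullet> to_cart y = (\<Sum>i\<in>UNIV. (x \<bullet> basis_vec i) * (y \<bullet> basis_vec i))"
    by (simp add: to_cart_def inner_vec_def)
  also have "\<dots> = x \<bullet> y"
    using sum_basis_vec[of "\<lambda>b. (x \<bullet> b) * (y \<bullet> b)"] euclidean_inner[of x y] by simp
  finally show ?thesis .
qed

lemma inner_from_cart [simp]: "from_cart v \<bullet> from_cart w = v \<bullet> w"
  by (metis inner_to_cart to_cart_from_cart)

lemma linear_to_cart: "linear to_cart"
  by (rule linearI) (simp_all add: to_cart_def vec_eq_iff inner_add_left)

lemma linear_from_cart: "linear from_cart"
  by (rule linearI) (simp_all add: from_cart_def scaleR_add_left sum.distrib scaleR_sum_right)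

lemma bij_to_cart: "bij to_cart"
  by (metis bij_betw_byWitness from_cart_to_cart to_cart_from_cart UNIV_I subsetI image_eqI)

lemma to_cart_borel_measurable: "to_cart \<in> borel_measurable borel"
  using linear_to_cart
  by (intro borel_measurable_continuous_onI linear_continuous_on) (simp add: linear_conv_bounded_linear)

lemma prod_Basis_cart: "(\<Prod>c\<in>(Basis :: (real^'n) set). f c) = (\<Prod>i\<in>UNIV. f (axis i 1))"
proof -
  have "(Basis :: (real^'n) set) = (\<lambda>i. axis i 1) ` UNIV"
    by (auto simp: Basis_vec_def)
  moreover have "inj (\<lambda>i::'n. axis i (1::real))"
    by (auto simp: inj_on_def axis_eq_axis)
  ultimately show ?thesis using prod.reindex[of "\<lambda>i::'n. axis i (1::real)" UNIV f] by simp
qed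

lemma distr_to_cart_lborel: "distr lborel borel (to_cart :: 'a::euclidean_space \<Rightarrow> _) = lborel"
proof (rule lborel_eqI[symmetric])
  fix l u :: "real ^ 'a basis_index"
  assume lu: "\<And>b. b \<in> Basis \<Longrightarrow> l \<bullet> b \<le> u \<bullet> b"
  have le: "l $ i \<le> u $ i" for i using lu[of "axis i 1"] by (simp add: inner_axis)
  have "x \<in> box (from_cart l) (from_cart u) \<longleftrightarrow> (\<forall>i. l $ i < x \<bullet> basis_vec i \<and> x \<bullet> basis_vec i < u $ i)"
    for x :: 'a
    unfolding mem_box ball_Basis_iff_basis_vec by (simp add: inner_from_cart_basis_vec)
  then have "to_cart -` box l u = box (from_cart l) (from_cart u :: 'a)"
    by (auto simp: mem_box_cart to_cart_def)
  then have "emeasure (distr lborel borel to_cart) (box l u) = emeasure lborel (box (from_cart l) (from_cart u :: 'a))"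
    using to_cart_borel_measurable by (subst emeasure_distr) auto
  also have "\<dots> = (\<Prod>b\<in>Basis. (from_cart u - from_cart l :: 'a) \<bullet> b)"
    using le by (subst emeasure_lborel_box_eq)
      (auto simp: ball_Basis_iff_basis_vec inner_from_cart_basis_vec inner_diff_left)
  also have "\<dots> = (\<Prod>i\<in>UNIV. (u $ i - l $ i))"
    by (subst prod_basis_vec[symmetric]) (simp add: inner_diff_left inner_from_cart_basis_vec)
  also have "\<dots> = (\<Prod>b\<in>Basis. (u - l) \<bullet> b)"
    by (simp add: prod_Basis_cart inner_axis)
  finally show "emeasure (distr lborel borel to_cart) (box l u) = (\<Prod>b\<in>Basis. (u - l) \<bullet> b)" .
qed simp

lemma measure_to_cart_image:
  assumes "S \<in> sets borel"
  shows "measure lborel (to_cart ` S) = measure lborel (S :: 'a::euclidean_space set)"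
proof -
  have inv: "to_cart -` to_cart ` S = S"
    by (rule inj_vimage_image_eq[OF bij_is_inj[OF bij_to_cart]])
  have "to_cart ` S = from_cart -` S"
    by (auto simp: image_iff) (metis to_cart_from_cart)
  moreover have "from_cart \<in> borel_measurable borel"
    using linear_from_cart
    by (intro borel_measurable_continuous_onI linear_continuous_on) (simp add: linear_conv_bounded_linear)
  ultimately have "to_cart ` S \<in> sets borel"
    using measurable_sets[of from_cart borel borel S] assms by simp
  then have "measure (distr lborel borel to_cart) (to_cart ` S) = measure lborel (to_cart -` to_cart ` S)"
    using to_cart_borel_measurable by (subst measure_distr) auto
  then show ?thesis
    by (simp add: distr_to_cart_lborel inv)
qed

lemma orthogonal_transformation_exists_euclidean:
  fixes u v :: "'a::euclidean_space"
  assumes "norm u = norm v"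
  obtains f where "orthogonal_transformation f" "f u = v"
proof -
  have "norm (to_cart u) = norm (to_cart v)"
    using assms by (simp add: norm_eq_sqrt_inner)
  then obtain g where g: "orthogonal_transformation g" "g (to_cart u) = to_cart v"
    by (rule orthogonal_transformation_exists)
  have "orthogonal_transformation (from_cart \<circ> g \<circ> to_cart)"
    using g(1) linear_from_cart linear_to_cart
    by (auto simp: orthogonal_transformation_def intro: linear_compose)
  moreover have "(from_cart \<circ> g \<circ> to_cart) u = v" by (simp add: g(2))
  ultimately show ?thesis by (rule that)
qed

lemma measure_orthogonal_image_euclidean:
  fixes f :: "'a::euclidean_space \<Rightarrow> 'a"
  assumes f: "orthogonal_transformation f" and S: "compact S"
  shows "measure lborel (f ` S) = measure lborel S"
proof -
  let ?g = "to_cart \<circ> f \<circ> from_cart"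
  have g: "orthogonal_transformation ?g"
    using f linear_from_cart linear_to_cart
    by (auto simp: orthogonal_transformation_def intro: linear_compose)
  have cont: "continuous_on UNIV h" if "linear h" for h :: "'b::euclidean_space \<Rightarrow> 'c::euclidean_space"
    using that by (simp add: linear_continuous_on linear_conv_bounded_linear)
  have cS: "compact (to_cart ` S)" and cfS: "compact (f ` S)"
    using S cont[OF linear_to_cart] cont[OF orthogonal_transformation_linear[OF f]]
    by (auto intro: compact_continuous_image continuous_on_subset)
  have img: "to_cart ` f ` S = ?g ` to_cart ` S" by (force simp: image_comp)
  have "measure lborel (f ` S) = measure lborel (to_cart ` f ` S)"
    using cfS by (simp add: measure_to_cart_image compact_imp_closed borel_closed)
  also have "\<dots> = measure lebesgue (?g ` to_cart ` S)"
  proof -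
    have "compact (to_cart ` f ` S)"
      using cfS cont[OF linear_to_cart] by (auto intro: compact_continuous_image continuous_on_subset)
    then show ?thesis
      unfolding img[symmetric] by (simp add: measure_completion compact_imp_closed borel_closed)
  qed
  also have "\<dots> = measure lebesgue (to_cart ` S)"
    by (rule measure_orthogonal_image[OF g lmeasurable_compact[OF cS]])
  also have "\<dots> = measure lborel S"
    using cS S by (simp add: measure_completion compact_imp_closed borel_closed measure_to_cart_image)
  finally show ?thesis .
qed
section \<open>Right circular cones and spherical sectors\<close>

lemma norm_sum_scaleR_Basis:
  fixes f :: "'b::euclidean_space \<Rightarrow> real"
  assumes "A \<subseteq> Basis"
  shows "norm (\<Sum>b\<in>A. f b *\<^sub>R b) = sqrt (\<Sum>b\<in>A. (f b)\<^sup>2)"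
proof -
  have fin: "finite A" by (rule finite_subset[OF assms finite_Basis])
  have "(\<Sum>b\<in>A. f b *\<^sub>R b) \<bullet> (\<Sum>c\<in>A. f c *\<^sub>R c) = (\<Sum>b\<in>A. \<Sum>c\<in>A. f b * f c * (b \<bullet> c))"
    unfolding inner_sum_left inner_sum_right by (intro sum.cong refl) (simp add: algebra_simps inner_commute)
  also have "\<dots> = (\<Sum>b\<in>A. (f b)\<^sup>2)"
  proof (rule sum.cong[OF refl])
    fix b assume b: "b \<in> A"
    have "(\<Sum>c\<in>A. f b * f c * (b \<bullet> c)) = (\<Sum>c\<in>A. if c = b then f b * f b else 0)"
    proof (rule sum.cong[OF refl])
      fix c assume c: "c \<in> A"
      then have bc: "b \<in> Basis" "c \<in> Basis" using b assms by auto
      show "f b * f c * (b \<bullet> c) = (if c = b then f b * f b else 0)" using bc by (auto simp: inner_Basis)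
    qed
    also have "\<dots> = (f b)\<^sup>2" using b fin by (simp add: power2_eq_square)
    finally show "(\<Sum>c\<in>A. f b * f c * (b \<bullet> c)) = (f b)\<^sup>2" .
  qed
  finally have "(\<Sum>b\<in>A. f b *\<^sub>R b) \<bullet> (\<Sum>c\<in>A. f c *\<^sub>R c) = (\<Sum>b\<in>A. (f b)\<^sup>2)" .
  then show ?thesis unfolding norm_eq_sqrt_inner by simp
qed

lemma nn_integral_monomial_Icc:
  fixes c h :: real and m :: nat assumes "h > 0" "c \<ge> 0"
  shows "(\<integral>\<^sup>+ y. ennreal (c * y ^ m) * indicator {0..h} y \<partial>lborel) = ennreal (c * h ^ Suc m / Suc m)"
proof -
  have "(\<integral>\<^sup>+ y. ennreal (c * y ^ m) * indicator {0..h} y \<partial>lborel) = ennreal (c * h ^ Suc m / Suc m - c * 0 ^ Suc m / Suc m)"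
  proof (rule nn_integral_FTC_Icc)
    show "(\<lambda>y. c * y ^ m) \<in> borel_measurable borel" by measurable
    fix x :: real assume "x \<in> {0..h}"
    have dp: "((\<lambda>y. y ^ Suc m) has_real_derivative real (Suc m) * x ^ m) (at x)"
      using DERIV_pow[of "Suc m" x] by simp
    then have "((\<lambda>y. c * y ^ Suc m / Suc m) has_real_derivative c * (real (Suc m) * x ^ m) / Suc m) (at x)"
      using DERIV_cdivide[OF DERIV_cmult[OF dp, of c], of "real (Suc m)"] by simp
    then show "((\<lambda>y. c * y ^ Suc m / Suc m) has_real_derivative c * x ^ m) (at x)"
      by simp
    show "0 \<le> c * x ^ m" using \<open>x \<in> {0..h}\<close> assms by auto
  qed (use assms in auto)
  then show ?thesis by simp
qed

definition right_cone :: "'a::real_inner \<Rightarrow> real \<Rightarrow> real \<Rightarrow> 'a set" where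
  "right_cone b h k = {x. 0 \<le> x \<bullet> b \<and> x \<bullet> b \<le> h \<and> norm (x - (x \<bullet> b) *\<^sub>R b) \<le> k * (x \<bullet> b)}"

lemma emeasure_lborel_eq_nn_integral_slices:
  fixes b0 :: "'b::euclidean_space"
  assumes b0: "b0 \<in> Basis" and S [measurable]: "S \<in> sets borel"
  defines "A \<equiv> Basis - {b0}"
  shows "emeasure lborel S = (\<integral>\<^sup>+ y. emeasure (Pi\<^sub>M A (\<lambda>_. lborel))
           {x \<in> space (Pi\<^sub>M A (\<lambda>_. lborel)). y *\<^sub>R b0 + (\<Sum>b\<in>A. x b *\<^sub>R b) \<in> S} \<partial>lborel)"
proof -
  have BA: "Basis = insert b0 A" and b0A: "b0 \<notin> A" and finA: "finite A"
    using b0 by (auto simp: A_def)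
  define g :: "('b \<Rightarrow> real) \<Rightarrow> 'b" where "g f = (\<Sum>b\<in>Basis. f b *\<^sub>R b)" for f
  have g_upd: "g (x(b0 := y)) = y *\<^sub>R b0 + (\<Sum>b\<in>A. x b *\<^sub>R b)" for x y
  proof -
    have "(\<Sum>b\<in>A. (x(b0 := y)) b *\<^sub>R b) = (\<Sum>b\<in>A. x b *\<^sub>R b)"
      using b0A by (intro sum.cong) auto
    then show ?thesis unfolding g_def BA using b0A finA by (simp add: sum.insert)
  qed
  have g_meas: "g \<in> borel_measurable (Pi\<^sub>M Basis (\<lambda>_. lborel))"
    unfolding g_def by measurable
  interpret product_sigma_finite "\<lambda>_::'b. lborel"
    by standard
  define X where "X = g -` S \<inter> space (Pi\<^sub>M Basis (\<lambda>_. lborel))"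
  have X: "X \<in> sets (Pi\<^sub>M (insert b0 A) (\<lambda>_. lborel))"
    unfolding X_def BA[symmetric] using g_meas S by (rule measurable_sets)
  have "emeasure lborel S = emeasure (distr (Pi\<^sub>M Basis (\<lambda>_. lborel)) borel g) S"
    unfolding g_def[abs_def] by (subst lborel_eq) rule
  also have "\<dots> = (\<integral>\<^sup>+ f. indicator X f \<partial>Pi\<^sub>M (insert b0 A) (\<lambda>_. lborel))"
    unfolding X_def BA[symmetric] using g_meas S by (subst emeasure_distr) auto
  also have "\<dots> = (\<integral>\<^sup>+ y. \<integral>\<^sup>+ x. indicator X (x(b0 := y)) \<partial>Pi\<^sub>M A (\<lambda>_. lborel) \<partial>lborel)"
    using finA b0A X by (subst product_nn_integral_insert_rev) auto
  also have "\<dots> = (\<integral>\<^sup>+ y. emeasure (Pi\<^sub>M A (\<lambda>_. lborel))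
           {x \<in> space (Pi\<^sub>M A (\<lambda>_. lborel)). y *\<^sub>R b0 + (\<Sum>b\<in>A. x b *\<^sub>R b) \<in> S} \<partial>lborel)"
  proof (intro nn_integral_cong)
    fix y :: real
    have "x(b0 := y) \<in> space (Pi\<^sub>M Basis (\<lambda>_. lborel))" if "x \<in> space (Pi\<^sub>M A (\<lambda>_. lborel))" for x
      using that unfolding BA by (auto simp: space_PiM PiE_def extensional_def)
    then have "(\<integral>\<^sup>+ x. indicator X (x(b0 := y)) \<partial>Pi\<^sub>M A (\<lambda>_. lborel))
        = (\<integral>\<^sup>+ x. indicator {x \<in> space (Pi\<^sub>M A (\<lambda>_. lborel)). y *\<^sub>R b0 + (\<Sum>b\<in>A. x b *\<^sub>R b) \<in> S} x \<partial>Pi\<^sub>M A (\<lambda>_. lborel))"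
      by (intro nn_integral_cong) (auto simp: X_def g_upd indicator_def)
    also have "\<dots> = emeasure (Pi\<^sub>M A (\<lambda>_. lborel)) {x \<in> space (Pi\<^sub>M A (\<lambda>_. lborel)). y *\<^sub>R b0 + (\<Sum>b\<in>A. x b *\<^sub>R b) \<in> S}"
      by (intro nn_integral_indicator) measurable
    finally show "(\<integral>\<^sup>+ x. indicator X (x(b0 := y)) \<partial>Pi\<^sub>M A (\<lambda>_. lborel)) = \<dots>" .
  qed
  finally show ?thesis .
qed

lemma emeasure_right_cone:
  fixes b0 :: "'b::euclidean_space"
  assumes b0: "b0 \<in> Basis" and h: "h > 0" and k: "k > 0"
  shows "emeasure lborel (right_cone b0 h k)
     = ennreal (unit_ball_vol (real (DIM('b) - 1)) * k ^ (DIM('b) - 1) * h ^ DIM('b) / DIM('b))"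
proof -
  define A where "A = Basis - {b0}"
  define m where "m = DIM('b) - 1"
  let ?M = "Pi\<^sub>M A (\<lambda>_::'b. lborel)"
  have finA: "finite A" and cardA: "card A = m" and AB: "A \<subseteq> Basis"
    using b0 by (auto simp: A_def m_def)
  have dm: "DIM('b) = Suc m" unfolding m_def using DIM_positive[where 'a='b] by linarith
  have slice: "{x \<in> space ?M. y *\<^sub>R b0 + (\<Sum>b\<in>A. x b *\<^sub>R b) \<in> right_cone b0 h k}
      = (if y \<in> {0..h} then {f. sqrt (\<Sum>i\<in>A. (f i)\<^sup>2) \<le> k * y} \<inter> space ?M else {})" for y
  proof -
    have "y *\<^sub>R b0 + (\<Sum>b\<in>A. x b *\<^sub>R b) \<in> right_cone b0 h k
        \<longleftrightarrow> y \<in> {0..h} \<and> sqrt (\<Sum>i\<in>A. (x i)\<^sup>2) \<le> k * y" for x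
    proof -
      have "(\<Sum>b\<in>A. x b *\<^sub>R b) \<bullet> b0 = 0"
        using b0 AB by (auto simp: A_def inner_sum_left inner_Basis intro!: sum.neutral)
      then have "(y *\<^sub>R b0 + (\<Sum>b\<in>A. x b *\<^sub>R b)) \<bullet> b0 = y"
        using b0 by (simp add: inner_add_left)
      then show ?thesis
        by (simp add: right_cone_def norm_sum_scaleR_Basis[OF AB])
    qed
    then show ?thesis by auto
  qed
  have "emeasure lborel (right_cone b0 h k)
      = (\<integral>\<^sup>+ y. ennreal (unit_ball_vol (real m) * k ^ m * y ^ m) * indicator {0..h} y \<partial>lborel)"
  proof -
    have "right_cone b0 h k \<in> sets borel" unfolding right_cone_def by measurable
    then have "emeasure lborel (right_cone b0 h k) = (\<integral>\<^sup>+ y. emeasure ?M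
        {x \<in> space ?M. y *\<^sub>R b0 + (\<Sum>b\<in>A. x b *\<^sub>R b) \<in> right_cone b0 h k} \<partial>lborel)"
      unfolding A_def by (rule emeasure_lborel_eq_nn_integral_slices[OF b0])
    also have "\<dots> = (\<integral>\<^sup>+ y. emeasure ?M
        (if y \<in> {0..h} then {f. sqrt (\<Sum>i\<in>A. (f i)\<^sup>2) \<le> k * y} \<inter> space ?M else {}) \<partial>lborel)"
      by (simp only: slice)
    also have "\<dots> = (\<integral>\<^sup>+ y. ennreal (unit_ball_vol (real m) * k ^ m * y ^ m) * indicator {0..h} y \<partial>lborel)"
    proof (intro nn_integral_cong_AE)
      \<comment> \<open>the degenerate slice \<open>y = 0\<close> is a null set\<close>
      show "AE y in lborel. emeasure ?M (if y \<in> {0..h} then {f. sqrt (\<Sum>i\<in>A. (f i)\<^sup>2) \<le> k * y} \<inter> space ?M else {})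
          = ennreal (unit_ball_vol (real m) * k ^ m * y ^ m) * indicator {0..h} y"
        using AE_lborel_singleton[of 0]
      proof eventually_elim
        case (elim y)
        show ?case
        proof (cases "y \<in> {0..h}")
          case True
          with elim k have "k * y > 0" by auto
          from emeasure_cball_aux[OF finA this] True show ?thesis
            by (simp add: cardA power_mult_distrib mult.assoc)
        next
          case False
          then show ?thesis
            by (simp only: if_False indicator_simps(2)[OF False] mult_zero_right emeasure_empty)
        qed
      qed
    qed
    finally show ?thesis .
  qed
  also have "\<dots> = ennreal (unit_ball_vol (real m) * k ^ m * h ^ Suc m / Suc m)"
    using h k by (intro nn_integral_monomial_Icc) auto
  finally show ?thesis by (simp add: dm)
qed

definition spherical_sector :: "'a::real_inner \<Rightarrow> real \<Rightarrow> 'a set" where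
  "spherical_sector u c = {x. norm x \<le> 1 \<and> c * norm x \<le> x \<bullet> u}"

lemma spherical_sector_borel [measurable]: "spherical_sector (u::'a::euclidean_space) c \<in> sets borel"
  unfolding spherical_sector_def by measurable

lemma compact_spherical_sector: "compact (spherical_sector (u::'a::euclidean_space) c)"
  unfolding compact_eq_bounded_closed
proof
  show "bounded (spherical_sector u c)" unfolding spherical_sector_def bounded_iff by auto
  have "closed {x::'a. norm x \<le> 1}" "closed {x::'a. c * norm x \<le> x \<bullet> u}"
    by (intro closed_Collect_le continuous_intros)+
  then show "closed (spherical_sector u c)" unfolding spherical_sector_def Collect_conj_eq by auto
qed

lemma orthogonal_transformation_image_spherical_sector:
  fixes f :: "'a::euclidean_space \<Rightarrow> 'a"
  assumes f: "orthogonal_transformation f"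
  shows "f ` spherical_sector u c = spherical_sector (f u) c"
proof -
  have inner: "f x \<bullet> f y = x \<bullet> y" and norm: "norm (f x) = norm x" for x y
    using f by (auto simp: orthogonal_transformation_def orthogonal_transformation_norm)
  have "y \<in> f ` spherical_sector u c" if "y \<in> spherical_sector (f u) c" for y
  proof -
    obtain x where "y = f x" using orthogonal_transformation_surj[OF f] by (metis surjD)
    then show ?thesis using that by (auto simp: spherical_sector_def norm inner)
  qed
  then show ?thesis by (auto simp: spherical_sector_def norm inner)
qed

lemma measure_spherical_sector_eq:
  fixes u v :: "'a::euclidean_space"
  assumes "norm u = 1" "norm v = 1"
  shows "measure lborel (spherical_sector u c) = measure lborel (spherical_sector v c)"
proof -
  obtain f where f: "orthogonal_transformation f" "f u = v"
    using orthogonal_transformation_exists_euclidean[of u v] assms by auto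
  show ?thesis
    using measure_orthogonal_image_euclidean[OF f(1) compact_spherical_sector, of u c]
    by (simp add: orthogonal_transformation_image_spherical_sector[OF f(1)] f(2))
qed

lemma norm_diff_projection_sq:
  assumes "norm b = 1"
  shows "(norm (x - (x \<bullet> b) *\<^sub>R b))\<^sup>2 = (norm x)\<^sup>2 - (x \<bullet> b)\<^sup>2"
proof -
  have "b \<bullet> b = 1" using assms by (simp add: norm_eq_1)
  then show ?thesis unfolding power2_norm_eq_inner
    by (simp add: inner_diff_left inner_diff_right inner_commute power2_eq_square algebra_simps)
qed

lemma right_cone_subset_spherical_sector:
  assumes b: "norm b = 1" and c0: "0 < c" and c1: "c < 1"
  shows "right_cone b c (sqrt (1 - c\<^sup>2) / c) \<subseteq> spherical_sector b c"
proof
  define s where "s = sqrt (1 - c\<^sup>2)"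
  have s2: "s\<^sup>2 = 1 - c\<^sup>2" unfolding s_def using c0 c1 by (simp add: abs_square_le_1 less_imp_le)
  fix x assume x: "x \<in> right_cone b c (sqrt (1 - c\<^sup>2) / c)"
  define y where "y = x \<bullet> b"
  define z where "z = norm (x - (x \<bullet> b) *\<^sub>R b)"
  have y0: "0 \<le> y" and yc: "y \<le> c" and zy: "z \<le> s / c * y"
    using x by (auto simp: right_cone_def y_def z_def s_def)
  have "z\<^sup>2 \<le> (s / c * y)\<^sup>2" using power_mono[OF zy, of 2] by (simp add: z_def)
  also have "\<dots> = (1 - c\<^sup>2) * y\<^sup>2 / c\<^sup>2" by (simp add: power_mult_distrib power_divide s2)
  finally have z2: "z\<^sup>2 \<le> (1 - c\<^sup>2) * y\<^sup>2 / c\<^sup>2" .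
  have "(c * norm x)\<^sup>2 = c\<^sup>2 * (y\<^sup>2 + z\<^sup>2)"
    using norm_diff_projection_sq[OF b, of x] by (simp add: power_mult_distrib y_def z_def)
  also have "\<dots> \<le> c\<^sup>2 * (y\<^sup>2 + (1 - c\<^sup>2) * y\<^sup>2 / c\<^sup>2)"
    using z2 by (intro mult_left_mono) auto
  also have "\<dots> = y\<^sup>2" using c0 by (simp add: field_simps)
  finally have cy: "c * norm x \<le> y"
    using y0 by (rule power2_le_imp_le)
  then have "c * norm x \<le> c * 1" using yc by simp
  then have "norm x \<le> 1" using c0 by simp
  then show "x \<in> spherical_sector b c" using cy by (simp add: spherical_sector_def y_def)
qed

lemma spherical_sector_subset_right_cone:
  assumes b: "norm b = 1" and c0: "0 < c" and c1: "c < 1"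
  shows "spherical_sector b c \<subseteq> right_cone b 1 (sqrt (1 - c\<^sup>2) / c)"
proof
  define s where "s = sqrt (1 - c\<^sup>2)"
  have s2: "s\<^sup>2 = 1 - c\<^sup>2" unfolding s_def using c0 c1 by (simp add: abs_square_le_1 less_imp_le)
  have s0: "s > 0" unfolding s_def using c0 c1 by (simp add: abs_square_less_1)
  fix x assume x: "x \<in> spherical_sector b c"
  define y where "y = x \<bullet> b"
  define z where "z = norm (x - (x \<bullet> b) *\<^sub>R b)"
  have cy: "c * norm x \<le> y" and nx1: "norm x \<le> 1"
    using x unfolding spherical_sector_def y_def by auto
  have "0 \<le> c * norm x" using c0 by simp
  then have y0: "0 \<le> y" using cy by linarith
  have "y \<le> norm x * norm b" unfolding y_def by (rule norm_cauchy_schwarz)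
  then have y1: "y \<le> 1" using nx1 b by simp
  have nx: "z\<^sup>2 = (norm x)\<^sup>2 - y\<^sup>2" using norm_diff_projection_sq[OF b, of x] unfolding y_def z_def by simp
  have "(c * norm x)\<^sup>2 \<le> y\<^sup>2"
    using power_mono[OF cy \<open>0 \<le> c * norm x\<close>, of 2] by simp
  then have cn: "(norm x)\<^sup>2 * c\<^sup>2 \<le> y\<^sup>2" by (simp add: power_mult_distrib mult.commute)
  have c2: "0 < c\<^sup>2" using c0 by simp
  have "(norm x)\<^sup>2 \<le> y\<^sup>2 / c\<^sup>2" using cn pos_le_divide_eq[OF c2] by simp
  then have "z\<^sup>2 \<le> y\<^sup>2 / c\<^sup>2 - y\<^sup>2" using nx by simp
  also have "\<dots> = (1 - c\<^sup>2) * y\<^sup>2 / c\<^sup>2" using c2 by (simp add: diff_divide_distrib left_diff_distrib)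
  also have "\<dots> = (s / c * y)\<^sup>2" by (simp add: power_mult_distrib power_divide s2)
  finally have zz: "z\<^sup>2 \<le> (s / c * y)\<^sup>2" .
  have "0 \<le> s / c * y" using s0 c0 y0 by simp
  then have "z \<le> s / c * y" using zz by (rule power2_le_imp_le[rotated])
  then show "x \<in> right_cone b 1 (sqrt (1 - c\<^sup>2) / c)"
    using y0 y1 unfolding s_def by (simp add: right_cone_def y_def z_def)
qed

lemma measure_spherical_sector_bounds:
  fixes u :: "'a::euclidean_space"
  assumes u: "norm u = 1" and c0: "0 < c" and c1: "c < 1"
  defines "s \<equiv> sqrt (1 - c\<^sup>2)" and "m \<equiv> DIM('a) - 1"
  shows "unit_ball_vol m * s ^ m * c / DIM('a) \<le> measure lborel (spherical_sector u c)"
    and "measure lborel (spherical_sector u c) \<le> unit_ball_vol m * s ^ m / (c ^ m * DIM('a))"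
proof -
  obtain b0 :: 'a where b0: "b0 \<in> Basis" using nonempty_Basis by blast
  have nb0: "norm b0 = 1" using b0 by simp
  have s0: "s > 0" unfolding s_def using c0 c1 by (simp add: abs_square_less_1)
  have dm: "DIM('a) = Suc m" unfolding m_def using DIM_positive[where 'a='a] by linarith
  have vol: "measure lborel (right_cone b0 h k) = unit_ball_vol m * k ^ m * h ^ Suc m / Suc m"
    if "h > 0" "k > 0" for h k
    using emeasure_right_cone[OF b0 that] that by (simp add: measure_def dm)
  have fin: "right_cone b0 h k \<in> fmeasurable lborel" if "h > 0" "k > 0" for h k
    using emeasure_right_cone[OF b0 that] by (intro fmeasurableI) (auto simp: right_cone_def)
  have sector: "spherical_sector b0 c \<in> fmeasurable lborel"
    using compact_spherical_sector[of b0 c]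
    by (intro fmeasurableI emeasure_bounded_finite) (auto dest: compact_imp_bounded)
  have "unit_ball_vol m * s ^ m * c / DIM('a) = measure lborel (right_cone b0 c (s / c))"
    using c0 s0 by (simp add: vol dm power_divide field_simps)
  also have "\<dots> \<le> measure lborel (spherical_sector b0 c)"
    using right_cone_subset_spherical_sector[OF nb0 c0 c1] sector unfolding s_def
    by (intro measure_mono_fmeasurable) (auto simp: right_cone_def)
  finally show "unit_ball_vol m * s ^ m * c / DIM('a) \<le> measure lborel (spherical_sector u c)"
    using measure_spherical_sector_eq[OF u nb0] by simp
  have "measure lborel (spherical_sector b0 c) \<le> measure lborel (right_cone b0 1 (s / c))"
    using spherical_sector_subset_right_cone[OF nb0 c0 c1] fin[of 1 "s / c"] c0 s0 unfolding s_def
    by (intro measure_mono_fmeasurable) auto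
  also have "\<dots> = unit_ball_vol m * s ^ m / (c ^ m * DIM('a))"
    using c0 s0 by (simp add: vol dm power_divide)
  finally show "measure lborel (spherical_sector u c) \<le> unit_ball_vol m * s ^ m / (c ^ m * DIM('a))"
    using measure_spherical_sector_eq[OF u nb0] by simp
qed
section \<open>The uniform distribution on the sphere\<close>

lemma emeasure_unit_ball_neq:
  "emeasure lborel (ball (0::'a::euclidean_space) 1) \<noteq> 0"
  "emeasure lborel (ball (0::'a::euclidean_space) 1) \<noteq> \<infinity>"
proof -
  have "unit_ball_vol (real DIM('a)) > 0" by (rule unit_ball_vol_pos) simp
  then have "unit_ball_vol (real DIM('a)) \<noteq> 0" "\<not> unit_ball_vol (real DIM('a)) \<le> 0" by linarith+
  then show "emeasure lborel (ball (0::'a) 1) \<noteq> 0" "emeasure lborel (ball (0::'a) 1) \<noteq> \<infinity>"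
    using emeasure_ball[of 1 "0::'a"] by simp_all
qed

lemma sets_unif_sphere [simp, measurable_cong]: "sets (unif_sphere :: 'a::euclidean_space measure) = sets borel"
  by (simp add: unif_sphere_def)

lemma space_unif_sphere [simp]: "space (unif_sphere :: 'a::euclidean_space measure) = UNIV"
  by (simp add: unif_sphere_def)

lemma measurable_normalize_uniform: "(\<lambda>x::'a::euclidean_space. x /\<^sub>R norm x) \<in> borel_measurable (uniform_measure lborel (ball 0 1))"
proof -
  have "(\<lambda>x::'a::euclidean_space. x /\<^sub>R norm x) \<in> borel_measurable borel" by measurable
  then show ?thesis by (simp add: measurable_def)
qed

lemma prob_space_unif_sphere: "prob_space (unif_sphere :: 'a::euclidean_space measure)"
proof -
  interpret P: prob_space "uniform_measure lborel (ball (0::'a) 1)"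
    by (rule prob_space_uniform_measure[OF emeasure_unit_ball_neq])
  show ?thesis unfolding unif_sphere_def by (rule P.prob_space_distr[OF measurable_normalize_uniform])
qed

lemma AE_norm_unif_sphere: "AE \<theta> in (unif_sphere :: 'a::euclidean_space measure). norm \<theta> = 1"
proof -
  have "AE x in lborel. x \<noteq> (0::'a)" by (rule AE_lborel_singleton)
  then have "AE x in uniform_measure lborel (ball (0::'a) 1). x \<noteq> 0"
    by (intro AE_uniform_measureI) (auto elim!: eventually_mono)
  then have "AE x in uniform_measure lborel (ball (0::'a) 1). norm (x /\<^sub>R norm x) = 1"
    by eventually_elim simp
  moreover have "{\<theta>::'a. norm \<theta> = 1} \<in> sets borel" by measurable
  ultimately show ?thesis unfolding unif_sphere_def
    by (subst AE_distr_iff) (auto simp: measurable_normalize_uniform)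
qed

lemma null_sets_unit_sphere: "sphere (0::'a::euclidean_space) 1 \<in> null_sets lborel"
  using negligible_sphere[of "0::'a" 1]
  by (auto simp: null_sets_completion_iff negligible_iff_null_sets negligible_convex_frontier)

lemma ball_inter_normalize_vimage:
  fixes u :: "'a::euclidean_space"
  assumes "0 < c"
  shows "ball 0 1 \<inter> (\<lambda>x. x /\<^sub>R norm x) -` {\<theta>. c \<le> \<theta> \<bullet> u} = spherical_sector u c - ({0} \<union> sphere 0 1)"
proof (intro set_eqI iffI)
  fix x assume x: "x \<in> ball 0 1 \<inter> (\<lambda>x. x /\<^sub>R norm x) -` {\<theta>. c \<le> \<theta> \<bullet> u}"
  then have "c \<le> (x /\<^sub>R norm x) \<bullet> u" by simp
  moreover from this have "x \<noteq> 0" using assms by auto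
  ultimately show "x \<in> spherical_sector u c - ({0} \<union> sphere 0 1)"
    using x by (auto simp: spherical_sector_def field_simps)
next
  fix x assume "x \<in> spherical_sector u c - ({0} \<union> sphere 0 1)"
  then have "x \<noteq> 0" "norm x < 1" "c * norm x \<le> x \<bullet> u" by (auto simp: spherical_sector_def)
  then show "x \<in> ball 0 1 \<inter> (\<lambda>x. x /\<^sub>R norm x) -` {\<theta>. c \<le> \<theta> \<bullet> u}" by (simp add: field_simps)
qed

lemma measure_unif_sphere_cap:
  fixes u :: "'a::euclidean_space"
  assumes "0 < c"
  shows "measure unif_sphere {\<theta>. c \<le> \<theta> \<bullet> u} = measure lborel (spherical_sector u c) / unit_ball_vol DIM('a)"
proof -
  let ?U = "uniform_measure lborel (ball (0::'a) 1)"
  let ?g = "\<lambda>x::'a. x /\<^sub>R norm x"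
  have cap: "{\<theta>::'a. c \<le> \<theta> \<bullet> u} \<in> sets borel" by measurable
  have "?g \<in> borel_measurable borel" by measurable
  from measurable_sets[OF this cap] have g_cap: "?g -` {\<theta>. c \<le> \<theta> \<bullet> u} \<in> sets borel" by simp
  have "measure unif_sphere {\<theta>. c \<le> \<theta> \<bullet> u} = measure ?U (?g -` {\<theta>. c \<le> \<theta> \<bullet> u} \<inter> space ?U)"
    unfolding unif_sphere_def using measurable_normalize_uniform cap by (rule measure_distr)
  also have "\<dots> = measure lborel (ball 0 1 \<inter> ?g -` {\<theta>. c \<le> \<theta> \<bullet> u}) / measure lborel (ball (0::'a) 1)"
    using g_cap emeasure_unit_ball_neq by (subst measure_uniform_measure) auto
  also have "measure lborel (ball 0 1 \<inter> ?g -` {\<theta>. c \<le> \<theta> \<bullet> u}) = measure lborel (spherical_sector u c)"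
    unfolding ball_inter_normalize_vimage[OF assms]
    by (rule measure_Diff_null_set)
       (use null_sets.Un[OF countable_imp_null_set_lborel[of "{0::'a}"] null_sets_unit_sphere] in auto)
  also have "measure lborel (ball (0::'a) 1) = unit_ball_vol DIM('a)"
    using content_ball[of 1 "0::'a"] by simp
  finally show ?thesis .
qed

section \<open>Volumes of balls and spherical caps\<close>

lemma unit_ball_vol_add_two:
  "unit_ball_vol (real n + 2) = 2 * pi / (real n + 2) * unit_ball_vol (real n)"
proof -
  have nz: "real n / 2 + 1 \<notin> \<int>\<^sub>\<le>\<^sub>0"
    by (metis add_nonneg_pos divide_nonneg_nonneg nonpos_Ints_nonpos not_le of_nat_0_le_iff zero_less_numeral zero_less_one zero_le_numeral)
  have g: "Gamma ((real n + 2) / 2 + 1) = (real n / 2 + 1) * Gamma (real n / 2 + 1)"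
  proof -
    have e: "(real n + 2) / 2 + 1 = (real n / 2 + 1) + 1" by simp
    show ?thesis by (subst e) (rule Gamma_plus1[OF nz])
  qed
  have p: "pi powr ((real n + 2) / 2) = pi * pi powr (real n / 2)"
  proof -
    have e: "(real n + 2) / 2 = real n / 2 + 1" by simp
    show ?thesis by (subst e) (simp add: powr_add)
  qed
  have gp: "Gamma (real n / 2 + 1) > 0" by (intro Gamma_real_pos) simp
  show ?thesis unfolding unit_ball_vol_def g p using gp by (simp add: field_simps)
qed

lemma unit_ball_vol_mult_Beta:
  "unit_ball_vol (real n) * Beta (1 / 2) (real n / 2 + 1) = unit_ball_vol (real (Suc n))"
  by (auto simp: unit_ball_vol_def Beta_def Gamma_eq_zero_iff field_simps
          Gamma_one_half_real powr_half_sqrt [symmetric] powr_add [symmetric])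

lemma kappa_0: "kappa 0 = pi"
  by (simp add: kappa_def)

lemma kappa_Suc_eq_integral:
  "kappa (Suc n) = integral {-1..1} (\<lambda>x. sqrt (1 - x\<^sup>2) ^ n)"
proof -
  define f where "f x = sqrt (1 - x\<^sup>2) ^ n" for x :: real
  have "continuous_on {-1..1} f" unfolding f_def by (intro continuous_intros)
  then have "((\<lambda>t. sin t *\<^sub>R f (- cos t)) has_integral
      (integral {- cos 0..- cos pi} f - integral {- cos pi..- cos 0} f)) {0..pi}"
    by (intro has_integral_substitution_general[of "{}" 0 pi "\<lambda>t. - cos t" "-1" 1 f "sin"])
       (auto intro!: continuous_intros derivative_eq_intros)
  moreover have "sin t *\<^sub>R f (- cos t) = sin t ^ Suc n" if "t \<in> {0..pi}" for t
  proof -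
    have "1 - (- cos t)\<^sup>2 = (sin t)\<^sup>2" by (simp add: sin_squared_eq)
    then show ?thesis using sin_ge_zero[of t] that by (simp add: f_def)
  qed
  ultimately have "((\<lambda>t. sin t ^ Suc n) has_integral integral {-1..1} f) {0..pi}"
    by (subst (asm) has_integral_cong) auto
  then show ?thesis unfolding kappa_def f_def by (rule integral_unique)
qed

lemma integral_sqrt_one_minus_square_power:
  "integral {-1..1} (\<lambda>x. sqrt (1 - x\<^sup>2) ^ n) = Beta (1 / 2) (real n / 2 + 1)"
proof -
  define f where "f x = sqrt (1 - x\<^sup>2) ^ n" for x :: real
  have f0: "0 \<le> f x" if "x \<in> {-1..1}" for x
    using that abs_square_le_1[of x] by (simp add: f_def abs_le_iff)
  have fc: "continuous_on {-1..1} f" unfolding f_def by (intro continuous_intros)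
  have "(\<integral>\<^sup>+x. ennreal (f x) * indicator {-1..1} x \<partial>lborel) = ennreal (integral {-1..1} f)"
    using integrable_continuous_interval[OF fc] f0
    by (intro nn_integral_has_integral_lebesgue') (auto simp: has_integral_integral)
  also have "(\<integral>\<^sup>+x. ennreal (f x) * indicator {-1..1} x \<partial>lborel)
      = (\<integral>\<^sup>+x. indicator {-1..1} x * sqrt (1 - x\<^sup>2) ^ n \<partial>lborel)"
    by (intro nn_integral_cong) (auto simp: f_def indicator_def)
  finally have "ennreal (Beta (1 / 2) (real n / 2 + 1)) = ennreal (integral {-1..1} f)"
    unfolding emeasure_cball_aux_integral .
  moreover have "integral {-1..1} f \<ge> 0"
    using integrable_continuous_interval[OF fc] f0 by (rule integral_nonneg)
  moreover have "Beta (1 / 2) (real n / 2 + 1) \<ge> 0" by (simp add: Beta_def)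
  ultimately have "integral {-1..1} f = Beta (1 / 2) (real n / 2 + 1)" by simp
  then show ?thesis unfolding f_def .
qed

lemma kappa_Suc: "kappa (Suc n) = unit_ball_vol (real (Suc n)) / unit_ball_vol (real n)"
proof -
  have "unit_ball_vol (real n) > 0" by (rule unit_ball_vol_pos) simp
  then have "unit_ball_vol (real n) \<noteq> 0" by linarith
  then show ?thesis
    using unit_ball_vol_mult_Beta[of n]
    by (simp add: kappa_Suc_eq_integral integral_sqrt_one_minus_square_power eq_divide_eq mult.commute)
qed

lemma kappa_pos: "kappa n > 0"
proof (cases n)
  case 0 then show ?thesis by (simp add: kappa_0)
next
  case (Suc k)
  have "unit_ball_vol (real (Suc k)) > 0" "unit_ball_vol (real k) > 0" by (rule unit_ball_vol_pos, simp)+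
  then show ?thesis by (simp add: Suc kappa_Suc)
qed

lemma unit_ball_vol_ratio_eq_kappa:
  assumes "d \<ge> 2"
  shows "unit_ball_vol (real (d - 1)) / (real d * unit_ball_vol (real d)) = 1 / ((real d - 1) * kappa (d - 2))"
proof -
  obtain n where n: "d = n + 2" using assms by (metis add.commute le_Suc_ex)
  have rd: "real d = real n + 2" by (simp add: n)
  have Vd: "unit_ball_vol (real d) = 2 * pi / real d * unit_ball_vol (real n)"
    unfolding rd by (rule unit_ball_vol_add_two)
  show ?thesis
  proof (cases n)
    case 0
    then show ?thesis using Vd by (simp add: n kappa_0)
  next
    case (Suc k)
    have rd1: "real (d - 1) = real k + 2" "real d - 1 = real k + 2" by (simp_all add: n Suc)
    have Vd1: "unit_ball_vol (real (d - 1)) = 2 * pi / (real d - 1) * unit_ball_vol (real k)"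
      unfolding rd1 by (rule unit_ball_vol_add_two)
    have kap: "kappa (d - 2) = unit_ball_vol (real n) / unit_ball_vol (real k)"
      by (simp add: n Suc kappa_Suc)
    have p1: "unit_ball_vol (real n) > 0" "unit_ball_vol (real k) > 0" by simp_all
    have "real d - 1 > 0" using assms by simp
    then have d1: "real d - 1 \<noteq> 0" "real d \<noteq> 0" by simp_all
    have A: "real d * (2 * pi / real d * unit_ball_vol (real n)) = 2 * pi * unit_ball_vol (real n)"
      using d1 by simp
    have B: "2 * pi / D * a / (2 * pi * b) = 1 / (D * (b / a))" if "D \<noteq> 0" "a > 0" "b > 0" for D a b :: real
      using that pi_gt_zero by (simp add: field_simps)
    show ?thesis unfolding Vd Vd1 kap A by (rule B) (use d1 p1 in auto)
  qed
qed


lemma unif_sphere_cap_bounds: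
  fixes u :: "'a::euclidean_space"
  assumes u: "norm u = 1" and c0: "0 < c" and c1: "c < 1" and d2: "DIM('a) \<ge> 2"
  defines "Q \<equiv> 1 / ((real DIM('a) - 1) * kappa (DIM('a) - 2))" and "s \<equiv> sqrt (1 - c\<^sup>2)"
    and "m \<equiv> DIM('a) - 1"
  shows "Q * s ^ m * c \<le> measure unif_sphere {\<theta>::'a. c \<le> \<theta> \<bullet> u}"
    and "measure unif_sphere {\<theta>::'a. c \<le> \<theta> \<bullet> u} \<le> Q * s ^ m / c ^ m"
proof -
  have V: "unit_ball_vol (real DIM('a)) > 0" by (rule unit_ball_vol_pos) simp
  have Q: "Q = unit_ball_vol (real m) / (real DIM('a) * unit_ball_vol (real DIM('a)))"
    unfolding Q_def m_def using unit_ball_vol_ratio_eq_kappa[OF d2] by (simp add: of_nat_diff)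
  note cap = measure_unif_sphere_cap[OF c0, of u]
  have "Q * s ^ m * c = (unit_ball_vol m * s ^ m * c / DIM('a)) / unit_ball_vol DIM('a)"
    unfolding Q by (simp add: field_simps)
  also have "\<dots> \<le> measure unif_sphere {\<theta>::'a. c \<le> \<theta> \<bullet> u}"
    unfolding cap s_def m_def
    by (intro divide_right_mono measure_spherical_sector_bounds(1)[OF u c0 c1]) (use V in simp)
  finally show "Q * s ^ m * c \<le> measure unif_sphere {\<theta>::'a. c \<le> \<theta> \<bullet> u}" .
  have "measure unif_sphere {\<theta>::'a. c \<le> \<theta> \<bullet> u}
      \<le> (unit_ball_vol m * s ^ m / (c ^ m * DIM('a))) / unit_ball_vol DIM('a)"
    unfolding cap s_def m_def
    by (intro divide_right_mono measure_spherical_sector_bounds(2)[OF u c0 c1]) (use V in simp)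
  also have "\<dots> = Q * s ^ m / c ^ m"
    unfolding Q by (simp add: field_simps)
  finally show "measure unif_sphere {\<theta>::'a. c \<le> \<theta> \<bullet> u} \<le> Q * s ^ m / c ^ m" .
qed

section \<open>Hyperbolic distance in polar coordinates\<close>

lemma arcosh_le_iff:
  assumes "Y \<ge> 1" "T \<ge> 0"
  shows "arcosh Y \<le> T \<longleftrightarrow> Y \<le> cosh (T::real)"
proof -
  have "arcosh Y \<le> T \<longleftrightarrow> cosh (arcosh Y) \<le> cosh T"
    using assms by (subst cosh_real_nonneg_le_iff) auto
  also have "cosh (arcosh Y) = Y" using assms by simp
  finally show ?thesis .
qed

text \<open>The cosine of the largest angle at which points of Euclidean norms \<open>a\<close> and \<open>b\<close> are still
  within hyperbolic distance \<open>R\<close> (hyperbolic law of cosines).\<close>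

definition critical_cos :: "real \<Rightarrow> real \<Rightarrow> real \<Rightarrow> real \<Rightarrow> real" where
  "critical_cos \<zeta> R a b = (a\<^sup>2 + b\<^sup>2 - (cosh (\<zeta> * R) - 1) * ((1 - a\<^sup>2) * (1 - b\<^sup>2)) / 2) / (2 * a * b)"

lemma hyp_dist_scaleR_le_iff:
  fixes \<theta>1 \<theta>2 :: "'a::euclidean_space"
  assumes n1: "norm \<theta>1 = 1" and n2: "norm \<theta>2 = 1" and a: "0 < a" "a < 1" and b: "0 < b" "b < 1"
    and z: "\<zeta> > 0" and R: "R \<ge> 0"
  shows "hyp_dist \<zeta> (a *\<^sub>R \<theta>1) (b *\<^sub>R \<theta>2) \<le> R \<longleftrightarrow> critical_cos \<zeta> R a b \<le> \<theta>1 \<bullet> \<theta>2"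
proof -
  have lin: "2 * (u - w) \<le> t \<longleftrightarrow> u - t / 2 \<le> w" for u w t :: real by (auto simp: field_simps)
  define zz where "zz = \<theta>1 \<bullet> \<theta>2"
  define N where "N = a\<^sup>2 + b\<^sup>2 - 2 * a * b * zz"
  define P where "P = (1 - a\<^sup>2) * (1 - b\<^sup>2)"
  have t11: "\<theta>1 \<bullet> \<theta>1 = 1" using n1 by (simp add: norm_eq_1)
  have t22: "\<theta>2 \<bullet> \<theta>2 = 1" using n2 by (simp add: norm_eq_1)
  have nd: "(norm (a *\<^sub>R \<theta>1 - b *\<^sub>R \<theta>2))\<^sup>2 = N"
    unfolding power2_norm_eq_inner N_def zz_def
    by (simp add: inner_diff_left inner_diff_right t11 t22 inner_commute power2_eq_square algebra_simps)
  have na: "(norm (a *\<^sub>R \<theta>1))\<^sup>2 = a\<^sup>2" using n1 a by simp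
  have nb: "(norm (b *\<^sub>R \<theta>2))\<^sup>2 = b\<^sup>2" using n2 b by simp
  have P0: "P > 0" unfolding P_def using a b by (intro mult_pos_pos) (auto simp: power_less_one_iff abs_square_less_1)
  have N0: "N \<ge> 0" using nd[symmetric] by simp
  define Y where "Y = 1 + 2 * N / P"
  have Y1: "Y \<ge> 1" unfolding Y_def using N0 P0 by simp
  have "hyp_dist \<zeta> (a *\<^sub>R \<theta>1) (b *\<^sub>R \<theta>2) = arcosh Y / \<zeta>"
    unfolding hyp_dist_def Y_def P_def by (simp only: nd na nb)
  then have "hyp_dist \<zeta> (a *\<^sub>R \<theta>1) (b *\<^sub>R \<theta>2) \<le> R \<longleftrightarrow> arcosh Y \<le> \<zeta> * R"
    using z by (simp add: divide_le_eq mult.commute)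
  also have "\<dots> \<longleftrightarrow> Y \<le> cosh (\<zeta> * R)" using Y1 z R by (intro arcosh_le_iff) auto
  also have "\<dots> \<longleftrightarrow> 2 * N / P \<le> cosh (\<zeta> * R) - 1"
    unfolding Y_def by linarith
  also have "\<dots> \<longleftrightarrow> 2 * N \<le> (cosh (\<zeta> * R) - 1) * P"
    using P0 by (simp add: pos_divide_le_eq)
  also have "\<dots> \<longleftrightarrow> (a\<^sup>2 + b\<^sup>2 - (cosh (\<zeta> * R) - 1) * P / 2) \<le> 2 * a * b * zz"
    unfolding N_def by (rule lin)
  also have "\<dots> \<longleftrightarrow> (a\<^sup>2 + b\<^sup>2 - (cosh (\<zeta> * R) - 1) * P / 2) \<le> zz * (2 * a * b)"
    by (simp only: mult.commute[of "2 * a * b" zz])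
  also have "\<dots> \<longleftrightarrow> (a\<^sup>2 + b\<^sup>2 - (cosh (\<zeta> * R) - 1) * P / 2) / (2 * a * b) \<le> zz"
    using a b by (simp add: divide_le_eq)
  finally show ?thesis unfolding zz_def P_def critical_cos_def .
qed

lemma tanh_half_eq_exp: "tanh (x / 2) = (exp x - 1) / (exp x + 1 :: real)"
proof -
  have "tanh (x / 2) = (1 - exp (- x)) / (1 + exp (- x))" by (simp add: tanh_real_altdef)
  also have "\<dots> = (exp x - 1) / (exp x + 1)"
  proof -
    have "1 - exp (- x) = (exp x - 1) / exp x" "1 + exp (- x) = (exp x + 1) / exp x"
      by (simp_all add: exp_minus field_simps)
    then show ?thesis by simp
  qed
  finally show ?thesis .
qed

text \<open>With \<open>A = exp (\<zeta> \<rho>\<^sub>1)\<close>, \<open>B = exp (\<zeta> \<rho>\<^sub>2)\<close> and \<open>E = exp (\<zeta> R)\<close>, the Euclidean radii of the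
  points are \<open>(A - 1) / (A + 1)\<close> and \<open>(B - 1) / (B + 1)\<close>, and \<open>cosh (\<zeta> R) = (E + 1 / E) / 2\<close>.\<close>

lemma one_minus_critical_cos_eq:
  fixes A B E :: real
  assumes A: "A > 1" and B: "B > 1" and E: "E > 1"
  defines "a \<equiv> (A - 1) / (A + 1)" and "b \<equiv> (B - 1) / (B + 1)" and "C \<equiv> (E + 1 / E) / 2"
  shows "1 - (a\<^sup>2 + b\<^sup>2 - (C - 1) * ((1 - a\<^sup>2) * (1 - b\<^sup>2)) / 2) / (2 * a * b)
       = 2 * E / (A * B) * (((1 - 1 / E)\<^sup>2 - (A - B)\<^sup>2 / (A * B * E)) / ((1 - 1 / A\<^sup>2) * (1 - 1 / B\<^sup>2)))"
proof -
  define G where "G = A * B * (E - 1)\<^sup>2 / E - (A - B)\<^sup>2"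
  define X where "X = (C - 1) * ((1 - a\<^sup>2) * (1 - b\<^sup>2)) / 2"
  have a0: "a > 0" unfolding a_def using A by simp
  have b0: "b > 0" unfolding b_def using B by simp
  have s1: "1 - (a\<^sup>2 + b\<^sup>2 - X) / (2 * a * b) = (X - (a - b)\<^sup>2) / (2 * a * b)"
    using a0 b0 by (simp add: field_simps power2_eq_square)
  have pA: "(A + 1)\<^sup>2 > 0" "(B + 1)\<^sup>2 > 0" using A B by simp_all
  have e1: "1 - a\<^sup>2 = 4 * A / (A + 1)\<^sup>2"
    unfolding a_def power_divide using pA by (simp add: field_simps) (simp add: power2_eq_square algebra_simps)
  have e2: "1 - b\<^sup>2 = 4 * B / (B + 1)\<^sup>2"
    unfolding b_def power_divide using pA by (simp add: field_simps) (simp add: power2_eq_square algebra_simps)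
  have e3: "a - b = 2 * (A - B) / ((A + 1) * (B + 1))"
    unfolding a_def b_def using A B by (simp add: field_simps)
  have e4: "C - 1 = (E - 1)\<^sup>2 / (2 * E)"
    unfolding C_def using E by (simp add: field_simps power2_eq_square)
  have e5: "2 * a * b = 2 * (A - 1) * (B - 1) / ((A + 1) * (B + 1))"
    unfolding a_def b_def by simp
  have eX: "X = 4 * A * B * (E - 1)\<^sup>2 / (E * (A + 1)\<^sup>2 * (B + 1)\<^sup>2)"
    unfolding X_def e1 e2 e4 using A B E by (simp add: field_simps)
  have eab: "(a - b)\<^sup>2 = 4 * (A - B)\<^sup>2 / ((A + 1)\<^sup>2 * (B + 1)\<^sup>2)"
    unfolding e3 by (simp add: power_mult_distrib power_divide) (simp add: power2_eq_square algebra_simps)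
  have eN: "X - (a - b)\<^sup>2 = 4 * G / ((A + 1)\<^sup>2 * (B + 1)\<^sup>2)"
    unfolding eX eab G_def using A B E by (simp add: field_simps)
  have lhs: "(X - (a - b)\<^sup>2) / (2 * a * b) = 2 * G / ((A\<^sup>2 - 1) * (B\<^sup>2 - 1))"
  proof -
    have gen: "(4 * G / (p\<^sup>2 * r\<^sup>2)) / (2 * q * t / (p * r)) = 2 * G / ((p * q) * (r * t))"
      if "p \<noteq> 0" "q \<noteq> 0" "r \<noteq> 0" "t \<noteq> 0" for p q r t :: real
      using that by (simp add: field_simps) (simp add: power2_eq_square algebra_simps)
    have "(X - (a - b)\<^sup>2) / (2 * a * b) = (4 * G / ((A + 1)\<^sup>2 * (B + 1)\<^sup>2)) / (2 * (A - 1) * (B - 1) / ((A + 1) * (B + 1)))"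
      unfolding eN e5 ..
    also have "\<dots> = 2 * G / (((A + 1) * (A - 1)) * ((B + 1) * (B - 1)))"
      using A B by (intro gen) auto
    also have "((A + 1) * (A - 1)) = A\<^sup>2 - 1" by (simp add: power2_eq_square algebra_simps)
    also have "((B + 1) * (B - 1)) = B\<^sup>2 - 1" by (simp add: power2_eq_square algebra_simps)
    finally show ?thesis .
  qed
  have A2: "A\<^sup>2 > 1" "B\<^sup>2 > 1" using A B by (simp_all add: one_less_power)
  have rhs: "2 * E / (A * B) * (((1 - 1 / E)\<^sup>2 - (A - B)\<^sup>2 / (A * B * E)) / ((1 - 1 / A\<^sup>2) * (1 - 1 / B\<^sup>2)))
      = 2 * G / ((A\<^sup>2 - 1) * (B\<^sup>2 - 1))"
  proof -
    have r1: "(1 - 1 / A\<^sup>2) * (1 - 1 / B\<^sup>2) = (A\<^sup>2 - 1) * (B\<^sup>2 - 1) / (A\<^sup>2 * B\<^sup>2)"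
      using A B by (simp add: field_simps)
    have r2: "(1 - 1 / E)\<^sup>2 - (A - B)\<^sup>2 / (A * B * E) = G / (A * B * E)"
      unfolding G_def using A B E by (simp add: field_simps power2_eq_square)
    have gen: "2 * E / (A * B) * ((G / (A * B * E)) / (x * y / (A\<^sup>2 * B\<^sup>2))) = 2 * G / (x * y)"
      if "x \<noteq> 0" "y \<noteq> 0" for x y
      using that A B E by (simp add: field_simps) (simp add: power2_eq_square algebra_simps)
    show ?thesis unfolding r1 r2 using A2 by (intro gen) auto
  qed
  show ?thesis unfolding X_def[symmetric] s1 lhs rhs ..
qed

lemma correction_factor_bounds:
  fixes A B E \<eta> :: real
  assumes A: "A > 1" and B: "B > 1" and E: "E > 1" and e0: "0 < \<eta>" and e1: "\<eta> \<le> 1/8"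
    and hE: "1 / E \<le> \<eta>" and hA: "1 / A\<^sup>2 \<le> \<eta>" and hB: "1 / B\<^sup>2 \<le> \<eta>"
    and hAB: "A / (B * E) \<le> \<eta>" and hBA: "B / (A * E) \<le> \<eta>"
  defines "r \<equiv> ((1 - 1 / E)\<^sup>2 - (A - B)\<^sup>2 / (A * B * E)) / ((1 - 1 / A\<^sup>2) * (1 - 1 / B\<^sup>2))"
  shows "(1 - \<eta>)\<^sup>2 - 2 * \<eta> \<le> r" and "r \<le> 1 / (1 - \<eta>)\<^sup>2" and "(1 - \<eta>)\<^sup>2 - 2 * \<eta> > 0"
proof -
  define num where "num = (1 - 1 / E)\<^sup>2 - (A - B)\<^sup>2 / (A * B * E)"
  define den where "den = (1 - 1 / A\<^sup>2) * (1 - 1 / B\<^sup>2)"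
  have r: "r = num / den" unfolding r_def num_def den_def ..
  have ABE: "A * B * E > 0" using A B E by simp
  have x0: "(A - B)\<^sup>2 / (A * B * E) \<ge> 0" using ABE by simp
  have "(A - B)\<^sup>2 \<le> A\<^sup>2 + B\<^sup>2" using A B by (simp add: power2_eq_square algebra_simps)
  then have "(A - B)\<^sup>2 / (A * B * E) \<le> (A\<^sup>2 + B\<^sup>2) / (A * B * E)"
    using ABE by (simp add: divide_right_mono)
  also have "(A\<^sup>2 + B\<^sup>2) / (A * B * E) = A / (B * E) + B / (A * E)"
    using A B E by (simp add: field_simps power2_eq_square)
  finally have x2: "(A - B)\<^sup>2 / (A * B * E) \<le> 2 * \<eta>" using hAB hBA by linarith
  have iE: "0 < 1 / E" "1 / E < 1" using E by simp_all
  have "(1 - \<eta>)\<^sup>2 \<le> (1 - 1 / E)\<^sup>2" using hE e1 by (intro power_mono) auto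
  moreover have "(1 - 1 / E)\<^sup>2 \<le> 1" using iE by (simp add: power_le_one)
  ultimately have n1: "(1 - \<eta>)\<^sup>2 - 2 * \<eta> \<le> num" and n2: "num \<le> 1"
    unfolding num_def using x0 x2 by linarith+
  have pos: "(1 - \<eta>)\<^sup>2 - 2 * \<eta> > 0"
  proof -
    have "(7/8::real)\<^sup>2 \<le> (1 - \<eta>)\<^sup>2" using e1 by (intro power_mono) auto
    then show ?thesis using e1 by (simp add: power2_eq_square)
  qed
  then show "(1 - \<eta>)\<^sup>2 - 2 * \<eta> > 0" .
  have iA: "0 < 1 / A\<^sup>2" "1 / A\<^sup>2 < 1" using A by (simp_all add: one_less_power)
  have iB: "0 < 1 / B\<^sup>2" "1 / B\<^sup>2 < 1" using B by (simp_all add: one_less_power)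
  have d1: "den \<le> 1" unfolding den_def using iA iB by (intro mult_le_one) auto
  have d0: "den > 0" unfolding den_def using iA iB by simp
  have d2: "(1 - \<eta>) * (1 - \<eta>) \<le> den" unfolding den_def using hA hB e1 by (intro mult_mono) auto
  have num0: "num > 0" using n1 pos by linarith
  have "num \<le> num / den" using num0 d0 d1 by (simp add: le_divide_eq)
  then show "(1 - \<eta>)\<^sup>2 - 2 * \<eta> \<le> r" unfolding r using n1 by linarith
  have "num / den \<le> 1 / den" using n2 d0 by (simp add: divide_right_mono)
  also have "1 / den \<le> 1 / (1 - \<eta>)\<^sup>2"
    using d2 d0 e1 by (intro divide_left_mono) (auto simp: power2_eq_square)
  finally show "r \<le> 1 / (1 - \<eta>)\<^sup>2" unfolding r .
qed
lemma (in prob_space) measure_pair_measure_bounds: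
  fixes lo hi :: real
  assumes N: "prob_space N" and X: "X \<in> sets (N \<Otimes>\<^sub>M M)"
    and slices: "AE x in N. lo \<le> measure M (Pair x -` X) \<and> measure M (Pair x -` X) \<le> hi"
  shows "lo \<le> measure (N \<Otimes>\<^sub>M M) X" and "measure (N \<Otimes>\<^sub>M M) X \<le> hi"
proof -
  interpret N: prob_space N by (rule N)
  have em: "emeasure (N \<Otimes>\<^sub>M M) X = (\<integral>\<^sup>+ x. ennreal (measure M (Pair x -` X)) \<partial>N)"
    using X by (simp add: emeasure_pair_measure_alt emeasure_eq_measure)
  have AE_lo: "AE x in N. ennreal lo \<le> ennreal (measure M (Pair x -` X))"
    using slices by eventually_elim (auto intro: ennreal_leI)
  have AE_hi: "AE x in N. ennreal (measure M (Pair x -` X)) \<le> ennreal hi"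
    using slices by eventually_elim (auto intro: ennreal_leI)
  have "ennreal lo = (\<integral>\<^sup>+ x. ennreal lo \<partial>N)" by (simp add: N.emeasure_space_1)
  also have "\<dots> \<le> emeasure (N \<Otimes>\<^sub>M M) X"
    unfolding em by (rule nn_integral_mono_AE[OF AE_lo])
  finally have lo: "ennreal lo \<le> emeasure (N \<Otimes>\<^sub>M M) X" .
  have "emeasure (N \<Otimes>\<^sub>M M) X \<le> (\<integral>\<^sup>+ x. ennreal hi \<partial>N)"
    unfolding em by (rule nn_integral_mono_AE[OF AE_hi])
  also have "\<dots> = ennreal hi" by (simp add: N.emeasure_space_1)
  finally have hi: "emeasure (N \<Otimes>\<^sub>M M) X \<le> ennreal hi" .
  have "AE x in N. 0 \<le> hi"
    using slices by eventually_elim (auto intro: order_trans[OF measure_nonneg])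
  then have hi0: "0 \<le> hi" by simp
  have "emeasure (N \<Otimes>\<^sub>M M) X = ennreal (measure (N \<Otimes>\<^sub>M M) X)"
    using hi by (intro emeasure_eq_ennreal_measure) (metis ennreal_neq_top neq_top_trans)
  then show "lo \<le> measure (N \<Otimes>\<^sub>M M) X" and "measure (N \<Otimes>\<^sub>M M) X \<le> hi"
    using lo hi hi0 by (simp_all add: ennreal_le_iff)
qed

lemma hyp_dist_scaleR_measurable:
  "(\<lambda>(x::'a::euclidean_space, y). hyp_dist \<zeta> (a *\<^sub>R x) (b *\<^sub>R y)) \<in> borel_measurable (borel \<Otimes>\<^sub>M borel)"
  unfolding hyp_dist_def arcosh_def by measurable

lemma measure_pair_hyp_dist_bounds:
  fixes a b \<zeta> R :: real
  assumes d2: "DIM('a::euclidean_space) \<ge> 2" and a: "0 < a" "a < 1" and b: "0 < b" "b < 1"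
    and z: "\<zeta> > 0" and R: "R \<ge> 0"
    and c0: "0 < critical_cos \<zeta> R a b" and c1: "critical_cos \<zeta> R a b < 1"
  defines "Q \<equiv> 1 / ((real DIM('a) - 1) * kappa (DIM('a) - 2))"
    and "s \<equiv> sqrt (1 - (critical_cos \<zeta> R a b)\<^sup>2)" and "m \<equiv> DIM('a) - 1"
  shows "Q * s ^ m * critical_cos \<zeta> R a b \<le> measure (unif_sphere \<Otimes>\<^sub>M (unif_sphere :: 'a measure))
              {(\<theta>1, \<theta>2). hyp_dist \<zeta> (a *\<^sub>R \<theta>1) (b *\<^sub>R \<theta>2) \<le> R}"
    and "measure (unif_sphere \<Otimes>\<^sub>M (unif_sphere :: 'a measure))
              {(\<theta>1, \<theta>2). hyp_dist \<zeta> (a *\<^sub>R \<theta>1) (b *\<^sub>R \<theta>2) \<le> R} \<le> Q * s ^ m / critical_cos \<zeta> R a b ^ m"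
proof -
  let ?M = "unif_sphere :: 'a measure"
  let ?c = "critical_cos \<zeta> R a b"
  define S where "S = {(\<theta>1::'a, \<theta>2::'a). hyp_dist \<zeta> (a *\<^sub>R \<theta>1) (b *\<^sub>R \<theta>2) \<le> R}"
  interpret M: prob_space ?M by (rule prob_space_unif_sphere)
  have S: "S \<in> sets (?M \<Otimes>\<^sub>M ?M)"
  proof -
    have "S = (\<lambda>(x, y). hyp_dist \<zeta> (a *\<^sub>R x) (b *\<^sub>R y)) -` {..R} \<inter> space (borel \<Otimes>\<^sub>M borel)"
      by (auto simp: S_def space_pair_measure)
    also have "\<dots> \<in> sets (borel \<Otimes>\<^sub>M borel)"
      by (rule measurable_sets[OF hyp_dist_scaleR_measurable]) simp
    finally show ?thesis by simp
  qed
  have slice: "measure ?M (Pair \<theta>1 -` S) = measure ?M {\<theta>. ?c \<le> \<theta> \<bullet> \<theta>1}" if n1: "norm \<theta>1 = 1" for \<theta>1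
  proof (rule measure_eq_AE)
    show "AE \<theta>2 in ?M. (\<theta>2 \<in> Pair \<theta>1 -` S) = (\<theta>2 \<in> {\<theta>. ?c \<le> \<theta> \<bullet> \<theta>1})"
      using AE_norm_unif_sphere
    proof eventually_elim
      case (elim \<theta>2)
      show ?case using hyp_dist_scaleR_le_iff[OF n1 elim a b z R] by (simp add: S_def inner_commute)
    qed
    show "Pair \<theta>1 -` S \<in> sets ?M" using S by (rule sets_Pair1)
    show "{\<theta>. ?c \<le> \<theta> \<bullet> \<theta>1} \<in> sets ?M" by simp
  qed
  have "AE \<theta>1 in ?M. Q * s ^ m * ?c \<le> measure ?M (Pair \<theta>1 -` S) \<and> measure ?M (Pair \<theta>1 -` S) \<le> Q * s ^ m / ?c ^ m"
    using AE_norm_unif_sphere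
  proof eventually_elim
    case (elim \<theta>1)
    show ?case
      unfolding slice[OF elim] Q_def s_def m_def
      using unif_sphere_cap_bounds[OF elim c0 c1 d2] by (rule conjI)
  qed
  from M.measure_pair_measure_bounds[OF prob_space_unif_sphere S this]
  show "Q * s ^ m * ?c \<le> measure (?M \<Otimes>\<^sub>M ?M) {(\<theta>1, \<theta>2). hyp_dist \<zeta> (a *\<^sub>R \<theta>1) (b *\<^sub>R \<theta>2) \<le> R}"
    "measure (?M \<Otimes>\<^sub>M ?M) {(\<theta>1, \<theta>2). hyp_dist \<zeta> (a *\<^sub>R \<theta>1) (b *\<^sub>R \<theta>2) \<le> R} \<le> Q * s ^ m / ?c ^ m"
    unfolding S_def by simp_all
qed
section \<open>Asymptotics\<close>

lemma exp_neg_mult_le: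
  fixes \<zeta> x \<omega> :: real
  assumes "\<zeta> > 0" "\<omega> \<le> x"
  shows "exp (- \<zeta> * x) \<le> exp (- \<zeta> * \<omega>)"
  using assms by (simp add: mult_left_mono)

lemma one_minus_critical_cos_asymptotics:
  fixes \<zeta> R \<omega> \<eta> t1 t2 :: real
  assumes z: "\<zeta> > 0" and w0: "\<omega> > 0" and eta: "\<eta> = exp (- \<zeta> * \<omega>)" and e8: "\<eta> \<le> 1/8"
    and t1: "0 \<le> t1" and t2: "0 \<le> t2" and tt: "t1 + t2 \<le> R - \<omega>"
  obtains r where
    "1 - critical_cos \<zeta> R (tanh (\<zeta> * (R - t1) / 2)) (tanh (\<zeta> * (R - t2) / 2))
       = 2 * exp (- \<zeta> * (R - t1 - t2)) * r"
    and "(1 - \<eta>)\<^sup>2 - 2 * \<eta> \<le> r" and "r \<le> 1 / (1 - \<eta>)\<^sup>2"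
proof -
  define A where "A = exp (\<zeta> * (R - t1))"
  define B where "B = exp (\<zeta> * (R - t2))"
  define E where "E = exp (\<zeta> * R)"
  have A1: "A > 1" and B1: "B > 1" and E1: "E > 1"
    unfolding A_def B_def E_def using z w0 t1 t2 tt by simp_all
  have e0: "\<eta> > 0" unfolding eta by simp
  have "1 / E = exp (- \<zeta> * R)" unfolding E_def by (simp add: exp_minus field_simps)
  then have hE: "1 / E \<le> \<eta>" unfolding eta using z w0 t1 t2 tt by (simp add: exp_neg_mult_le)
  have "1 / A\<^sup>2 = exp (- \<zeta> * (2 * (R - t1)))"
    unfolding A_def by (simp add: exp_minus field_simps power2_eq_square flip: exp_add)
  then have hA: "1 / A\<^sup>2 \<le> \<eta>" unfolding eta using z w0 t1 t2 tt by (simp add: exp_neg_mult_le)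
  have "1 / B\<^sup>2 = exp (- \<zeta> * (2 * (R - t2)))"
    unfolding B_def by (simp add: exp_minus field_simps power2_eq_square flip: exp_add)
  then have hB: "1 / B\<^sup>2 \<le> \<eta>" unfolding eta using z w0 t1 t2 tt by (simp add: exp_neg_mult_le)
  have "A / (B * E) = exp (- \<zeta> * (R + t1 - t2))"
    unfolding A_def B_def E_def by (simp add: exp_diff exp_add algebra_simps flip: exp_add exp_diff)
  then have hAB: "A / (B * E) \<le> \<eta>" unfolding eta using z w0 t1 t2 tt by (simp add: exp_neg_mult_le)
  have "B / (A * E) = exp (- \<zeta> * (R + t2 - t1))"
    unfolding A_def B_def E_def by (simp add: exp_diff exp_add algebra_simps flip: exp_add exp_diff)
  then have hBA: "B / (A * E) \<le> \<eta>" unfolding eta using z w0 t1 t2 tt by (simp add: exp_neg_mult_le)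
  define r where "r = ((1 - 1 / E)\<^sup>2 - (A - B)\<^sup>2 / (A * B * E)) / ((1 - 1 / A\<^sup>2) * (1 - 1 / B\<^sup>2))"
  have ta: "tanh (\<zeta> * (R - t1) / 2) = (A - 1) / (A + 1)"
    and tb: "tanh (\<zeta> * (R - t2) / 2) = (B - 1) / (B + 1)"
    unfolding A_def B_def by (simp_all add: tanh_half_eq_exp)
  have ch: "cosh (\<zeta> * R) = (E + 1 / E) / 2"
    unfolding E_def cosh_def by (simp add: exp_minus field_simps)
  have tau: "2 * E / (A * B) = 2 * exp (- \<zeta> * (R - t1 - t2))"
  proof -
    have "- \<zeta> * (R - t1 - t2) = \<zeta> * R - (\<zeta> * (R - t1) + \<zeta> * (R - t2))"
      by (simp add: algebra_simps)
    then show ?thesis unfolding A_def B_def E_def by (simp add: exp_diff exp_add)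
  qed
  have "1 - critical_cos \<zeta> R (tanh (\<zeta> * (R - t1) / 2)) (tanh (\<zeta> * (R - t2) / 2))
       = 2 * E / (A * B) * r"
    unfolding critical_cos_def ta tb ch r_def by (rule one_minus_critical_cos_eq[OF A1 B1 E1])
  then have "1 - critical_cos \<zeta> R (tanh (\<zeta> * (R - t1) / 2)) (tanh (\<zeta> * (R - t2) / 2))
       = 2 * exp (- \<zeta> * (R - t1 - t2)) * r"
    by (simp only: tau)
  moreover note correction_factor_bounds[OF A1 B1 E1 e0 e8 hE hA hB hAB hBA]
  ultimately show ?thesis using that unfolding r_def by blast
qed

text \<open>Explicit bounds for the ratio of the probability to its asymptotic value, in terms of
  \<open>\<eta> = exp (-\<zeta> \<omega>)\<close> and \<open>m = d - 1\<close>.\<close>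

definition ratio_lower :: "nat \<Rightarrow> real \<Rightarrow> real" where
  "ratio_lower m \<eta> = sqrt (((1 - \<eta>)\<^sup>2 - 2 * \<eta>) * (1 - \<eta> / (1 - \<eta>)\<^sup>2)) ^ m * (1 - 2 * \<eta> / (1 - \<eta>)\<^sup>2)"

definition ratio_upper :: "nat \<Rightarrow> real \<Rightarrow> real" where
  "ratio_upper m \<eta> = sqrt (1 / (1 - \<eta>)\<^sup>2) ^ m / (1 - 2 * \<eta> / (1 - \<eta>)\<^sup>2) ^ m"

lemma tendsto_ratio_bounds:
  assumes "\<eta> \<longlonglongrightarrow> 0"
  shows "(\<lambda>n. ratio_lower m (\<eta> n)) \<longlonglongrightarrow> 1" and "(\<lambda>n. ratio_upper m (\<eta> n)) \<longlonglongrightarrow> 1"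
proof -
  have "(\<lambda>n. ratio_lower m (\<eta> n)) \<longlonglongrightarrow> ratio_lower m 0"
    "(\<lambda>n. ratio_upper m (\<eta> n)) \<longlonglongrightarrow> ratio_upper m 0"
    unfolding ratio_lower_def ratio_upper_def by (intro tendsto_intros assms; simp)+
  then show "(\<lambda>n. ratio_lower m (\<eta> n)) \<longlonglongrightarrow> 1" "(\<lambda>n. ratio_upper m (\<eta> n)) \<longlonglongrightarrow> 1"
    by (simp_all add: ratio_lower_def ratio_upper_def)
qed

lemma ratio_bounds:
  fixes \<tau> r \<eta> :: real
  assumes e8: "\<eta> \<le> 1/8" and \<tau>0: "0 < \<tau>" and \<tau>1: "\<tau> \<le> 2 * \<eta>"
    and rlo: "(1 - \<eta>)\<^sup>2 - 2 * \<eta> \<le> r" and rhi: "r \<le> 1 / (1 - \<eta>)\<^sup>2"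
  defines "c \<equiv> 1 - \<tau> * r" and "g \<equiv> (1 - (1 - \<tau> * r)\<^sup>2) / (2 * \<tau>)"
  shows "0 < c" and "c < 1"
    and "ratio_lower m \<eta> \<le> sqrt g ^ m * c" and "sqrt g ^ m / c ^ m \<le> ratio_upper m \<eta>"
proof -
  define \<delta> where "\<delta> = \<tau> * r"
  define k where "k = 1 - 2 * \<eta> / (1 - \<eta>)\<^sup>2"
  have ne: "(1 - \<eta>)\<^sup>2 > 0" using e8 by simp
  have lo0: "(1 - \<eta>)\<^sup>2 - 2 * \<eta> > 0"
  proof -
    have "(7/8::real)\<^sup>2 \<le> (1 - \<eta>)\<^sup>2" using e8 by (intro power_mono) auto
    then show ?thesis using e8 by (simp add: power2_eq_square)
  qed
  have r0: "r > 0" using rlo lo0 by linarith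
  have \<delta>0: "\<delta> > 0" unfolding \<delta>_def using \<tau>0 r0 by simp
  have "\<delta> \<le> (2 * \<eta>) * (1 / (1 - \<eta>)\<^sup>2)"
    unfolding \<delta>_def using \<tau>1 rhi \<tau>0 r0 by (intro mult_mono) auto
  then have \<delta>1: "\<delta> \<le> 2 * \<eta> / (1 - \<eta>)\<^sup>2" by simp
  have k0: "k > 0"
  proof -
    have "2 * \<eta> / (1 - \<eta>)\<^sup>2 < 1" using lo0 ne by (simp add: divide_less_eq)
    then show ?thesis unfolding k_def by simp
  qed
  have kc: "k \<le> c" using \<delta>1 unfolding k_def c_def \<delta>_def by simp
  show c0: "0 < c" using k0 kc by linarith
  show c1: "c < 1" using \<delta>0 unfolding c_def \<delta>_def by simp
  \<comment> \<open>\<open>1 - c\<^sup>2 = \<delta> (2 - \<delta>)\<close>, so \<open>g = r (1 - \<delta> / 2)\<close>\<close>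
  have g: "g = r * (1 - \<delta> / 2)"
    unfolding g_def c_def \<delta>_def using \<tau>0 by (simp add: field_simps power2_eq_square)
  have hd0: "1 - \<eta> / (1 - \<eta>)\<^sup>2 > 0" using k0 unfolding k_def by simp
  have "2 * \<eta> / (1 - \<eta>)\<^sup>2 = 2 * (\<eta> / (1 - \<eta>)\<^sup>2)" by simp
  then have hd: "1 - \<eta> / (1 - \<eta>)\<^sup>2 \<le> 1 - \<delta> / 2" using \<delta>1 by linarith
  have g_lo: "((1 - \<eta>)\<^sup>2 - 2 * \<eta>) * (1 - \<eta> / (1 - \<eta>)\<^sup>2) \<le> g"
    unfolding g using rlo lo0 hd0 hd by (intro mult_mono) auto
  have g_hi: "g \<le> 1 / (1 - \<eta>)\<^sup>2"
  proof -
    have "g \<le> r * 1" unfolding g using \<delta>0 r0 by (intro mult_left_mono) auto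
    then show ?thesis using rhi by simp
  qed
  have g0: "g \<ge> 0" using g_lo lo0 hd0 by (smt (verit) mult_pos_pos)
  have "ratio_lower m \<eta> \<le> sqrt g ^ m * k"
    unfolding ratio_lower_def k_def[symmetric]
    using g_lo lo0 hd0 k0 by (intro mult_right_mono power_mono real_sqrt_le_mono) auto
  also have "\<dots> \<le> sqrt g ^ m * c" using kc g0 by (intro mult_left_mono) auto
  finally show "ratio_lower m \<eta> \<le> sqrt g ^ m * c" .
  have "sqrt g ^ m / c ^ m \<le> sqrt (1 / (1 - \<eta>)\<^sup>2) ^ m / k ^ m"
    using g_hi g0 kc k0 by (intro frac_le power_mono real_sqrt_le_mono) auto
  then show "sqrt g ^ m / c ^ m \<le> ratio_upper m \<eta>"
    unfolding ratio_upper_def k_def .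
qed

lemma pair_probability_ratio_bounds:
  fixes \<zeta> R \<omega> \<eta> t1 t2 :: real
  assumes d2: "DIM('a::euclidean_space) \<ge> 2" and z: "\<zeta> > 0" and w0: "\<omega> > 0"
    and eta: "\<eta> = exp (- \<zeta> * \<omega>)" and e8: "\<eta> \<le> 1/8"
    and t1: "0 \<le> t1" and t2: "0 \<le> t2" and tt: "t1 + t2 \<le> R - \<omega>"
  defines "P \<equiv> measure (unif_sphere \<Otimes>\<^sub>M (unif_sphere :: 'a measure))
              {(\<theta>1, \<theta>2). hyp_dist \<zeta> (hyp_point \<zeta> (R - t1) \<theta>1) (hyp_point \<zeta> (R - t2) \<theta>2) \<le> R}"
    and "F \<equiv> 2 ^ (DIM('a) - 1) / ((DIM('a) - 1) * kappa (DIM('a) - 2))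
              * exp (- \<zeta> * (DIM('a) - 1) * (R - t1 - t2) / 2)"
  shows "ratio_lower (DIM('a) - 1) \<eta> \<le> P / F" and "P / F \<le> ratio_upper (DIM('a) - 1) \<eta>"
proof -
  define m where "m = DIM('a) - 1"
  define a where "a = tanh (\<zeta> * (R - t1) / 2)"
  define b where "b = tanh (\<zeta> * (R - t2) / 2)"
  define w where "w = exp (- \<zeta> * (R - t1 - t2) / 2)"
  define \<tau> where "\<tau> = 2 * exp (- \<zeta> * (R - t1 - t2))"
  define Q where "Q = 1 / ((real DIM('a) - 1) * kappa (DIM('a) - 2))"
  obtain r where c': "1 - critical_cos \<zeta> R a b = \<tau> * r"
    and rlo: "(1 - \<eta>)\<^sup>2 - 2 * \<eta> \<le> r" and rhi: "r \<le> 1 / (1 - \<eta>)\<^sup>2"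
    unfolding a_def b_def \<tau>_def by (rule one_minus_critical_cos_asymptotics[OF z w0 eta e8 t1 t2 tt])
  define c where "c = critical_cos \<zeta> R a b"
  have c: "c = 1 - \<tau> * r" using c' unfolding c_def by simp
  define g where "g = (1 - c\<^sup>2) / (2 * \<tau>)"
  have \<tau>0: "0 < \<tau>" unfolding \<tau>_def by simp
  have \<tau>1: "\<tau> \<le> 2 * \<eta>" unfolding \<tau>_def eta using z tt by (simp add: exp_neg_mult_le)
  have bounds: "0 < c" "c < 1" "ratio_lower m \<eta> \<le> sqrt g ^ m * c" "sqrt g ^ m / c ^ m \<le> ratio_upper m \<eta>"
    unfolding g_def c using ratio_bounds[OF e8 \<tau>0 \<tau>1 rlo rhi] by blast+
  have a: "0 < a" "a < 1" and b: "0 < b" "b < 1"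
    unfolding a_def b_def using z w0 t1 t2 tt by (simp_all add: tanh_real_lt_1)
  have R0: "R \<ge> 0" using w0 t1 t2 tt by simp
  have "P = measure (unif_sphere \<Otimes>\<^sub>M (unif_sphere :: 'a measure))
              {(\<theta>1, \<theta>2). hyp_dist \<zeta> (a *\<^sub>R \<theta>1) (b *\<^sub>R \<theta>2) \<le> R}"
    unfolding P_def hyp_point_def a_def b_def ..
  with measure_pair_hyp_dist_bounds[OF d2 a b z R0, folded c_def, OF bounds(1,2)]
  have P: "Q * sqrt (1 - c\<^sup>2) ^ m * c \<le> P" "P \<le> Q * sqrt (1 - c\<^sup>2) ^ m / c ^ m"
    unfolding Q_def m_def by simp_all
  \<comment> \<open>\<open>F = Q (2 w)\<^sup>m\<close> and \<open>sqrt (1 - c\<^sup>2) = 2 w sqrt g\<close>, because \<open>(2 w)\<^sup>2 = 2 \<tau>\<close>\<close>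
  have w0': "w > 0" unfolding w_def by simp
  have "w\<^sup>2 = exp (- \<zeta> * (R - t1 - t2))" unfolding w_def power2_eq_square mult_exp_exp by simp
  then have w2: "(2 * w)\<^sup>2 = 2 * \<tau>" unfolding \<tau>_def by (simp add: power_mult_distrib)
  have F: "F = Q * (2 * w) ^ m"
  proof -
    have "- \<zeta> * (real DIM('a) - 1) * (R - t1 - t2) / 2 = real m * (- \<zeta> * (R - t1 - t2) / 2)"
      unfolding m_def using d2 by (simp add: of_nat_diff algebra_simps)
    then have "exp (- \<zeta> * (real DIM('a) - 1) * (R - t1 - t2) / 2) = exp (real m * (- \<zeta> * (R - t1 - t2) / 2))"
      by (simp only:)
    also have "\<dots> = w ^ m" unfolding w_def by (rule exp_of_nat_mult)
    finally have "exp (- \<zeta> * (real DIM('a) - 1) * (R - t1 - t2) / 2) = w ^ m" .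
    then show ?thesis unfolding F_def Q_def m_def by (simp add: power_mult_distrib)
  qed
  have "1 - c\<^sup>2 = (2 * w)\<^sup>2 * g" unfolding g_def w2 using \<tau>0 by simp
  then have "sqrt (1 - c\<^sup>2) = 2 * w * sqrt g" using w0' by (simp add: real_sqrt_mult)
  then have ratio_s: "sqrt (1 - c\<^sup>2) ^ m / (2 * w) ^ m = sqrt g ^ m"
    using w0' by (simp add: power_mult_distrib)
  have Q0: "Q > 0" unfolding Q_def using kappa_pos[of "DIM('a) - 2"] d2 by simp
  have Fpos: "F > 0" unfolding F using Q0 w0' by simp
  have "ratio_lower m \<eta> \<le> sqrt g ^ m * c" by (rule bounds(3))
  also have "\<dots> = Q * sqrt (1 - c\<^sup>2) ^ m * c / F"
    unfolding F using Q0 w0' ratio_s[symmetric] by (simp add: field_simps)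
  also have "\<dots> \<le> P / F" using P(1) Fpos by (intro divide_right_mono) auto
  finally show "ratio_lower (DIM('a) - 1) \<eta> \<le> P / F" unfolding m_def .
  have "P / F \<le> Q * sqrt (1 - c\<^sup>2) ^ m / c ^ m / F"
    using P(2) Fpos by (intro divide_right_mono) auto
  also have "\<dots> = sqrt g ^ m / c ^ m"
    unfolding F using Q0 w0' bounds(1) ratio_s[symmetric] by (simp add: field_simps)
  also have "\<dots> \<le> ratio_upper m \<eta>" by (rule bounds(4))
  finally show "P / F \<le> ratio_upper (DIM('a) - 1) \<eta>" unfolding m_def .
qed

lemma eventually_ratio_bounds:
  fixes \<zeta> \<epsilon> :: real and \<omega> :: "nat \<Rightarrow> real"
  assumes zeta: "\<zeta> > 0" and \<omega>: "filterlim \<omega> at_top sequentially" and \<epsilon>: "\<epsilon> > 0"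
  shows "\<forall>\<^sub>F n in sequentially. 1 - \<epsilon> < ratio_lower m (exp (- \<zeta> * \<omega> n))
      \<and> ratio_upper m (exp (- \<zeta> * \<omega> n)) < 1 + \<epsilon> \<and> exp (- \<zeta> * \<omega> n) \<le> 1/8 \<and> \<omega> n > 0"
proof -
  have "filterlim (\<lambda>n. - \<zeta> * \<omega> n) at_bot sequentially"
    using zeta \<omega> by (simp add: filterlim_uminus_at_bot filterlim_tendsto_pos_mult_at_top[OF tendsto_const])
  then have \<eta>: "(\<lambda>n. exp (- \<zeta> * \<omega> n)) \<longlonglongrightarrow> 0"
    by (rule filterlim_compose[OF exp_at_bot])
  have "\<forall>\<^sub>F n in sequentially. 1 - \<epsilon> < ratio_lower m (exp (- \<zeta> * \<omega> n))
      \<and> ratio_upper m (exp (- \<zeta> * \<omega> n)) < 1 + \<epsilon> \<and> exp (- \<zeta> * \<omega> n) < 1/8"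
    using tendsto_ratio_bounds[OF \<eta>, of m] \<eta> \<epsilon> by (intro eventually_conj order_tendstoD) auto
  moreover have "\<forall>\<^sub>F n in sequentially. \<omega> n > 0"
    using \<omega> by (simp add: filterlim_at_top_dense)
  ultimately show ?thesis by eventually_elim auto
qed

theorem lemma3p2:
  fixes \<zeta> :: real and R :: "nat \<Rightarrow> real"
  assumes d2: "DIM('a::euclidean_space) \<ge> 2"
    and zeta: "\<zeta> > 0"
    and R: "filterlim R at_top sequentially"
  defines "P \<equiv> \<lambda>n t1 t2. measure (unif_sphere \<Otimes>\<^sub>M (unif_sphere :: 'a measure))
              {(\<theta>1, \<theta>2). hyp_dist \<zeta> (hyp_point \<zeta> (R n - t1) \<theta>1)
                                     (hyp_point \<zeta> (R n - t2) \<theta>2) \<le> R n}"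
    and "F \<equiv> \<lambda>n t1 t2. 2 ^ (DIM('a) - 1) / ((DIM('a) - 1) * kappa (DIM('a) - 2))
              * exp (- \<zeta> * (DIM('a) - 1) * (R n - t1 - t2) / 2)"
    and "\<omega> \<equiv> \<lambda>n. ln (ln (R n))"
  shows "\<forall>\<epsilon>>0. \<forall>\<^sub>F n in sequentially. \<forall>t1 t2.
           0 \<le> t1 \<longrightarrow> 0 \<le> t2 \<longrightarrow> t1 \<le> R n \<longrightarrow> t2 \<le> R n \<longrightarrow> t1 + t2 \<le> R n - \<omega> n \<longrightarrow>
           \<bar>P n t1 t2 / F n t1 t2 - 1\<bar> \<le> \<epsilon>"
proof (intro allI impI)
  fix \<epsilon> :: real assume \<epsilon>: "\<epsilon> > 0"
  have "filterlim \<omega> at_top sequentially"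
    unfolding \<omega>_def by (intro filterlim_compose[OF ln_at_top] filterlim_compose[OF ln_at_top R])
  from eventually_ratio_bounds[OF zeta this \<epsilon>, of "DIM('a) - 1"]
  show "\<forall>\<^sub>F n in sequentially. \<forall>t1 t2.
           0 \<le> t1 \<longrightarrow> 0 \<le> t2 \<longrightarrow> t1 \<le> R n \<longrightarrow> t2 \<le> R n \<longrightarrow> t1 + t2 \<le> R n - \<omega> n \<longrightarrow>
           \<bar>P n t1 t2 / F n t1 t2 - 1\<bar> \<le> \<epsilon>"
  proof (elim eventually_mono, intro allI impI)
    fix n t1 t2
    assume n: "1 - \<epsilon> < ratio_lower (DIM('a) - 1) (exp (- \<zeta> * \<omega> n))
      \<and> ratio_upper (DIM('a) - 1) (exp (- \<zeta> * \<omega> n)) < 1 + \<epsilon> \<and> exp (- \<zeta> * \<omega> n) \<le> 1/8 \<and> \<omega> n > 0"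
      and t: "0 \<le> t1" "0 \<le> t2" "t1 \<le> R n" "t2 \<le> R n" "t1 + t2 \<le> R n - \<omega> n"
    then have "ratio_lower (DIM('a) - 1) (exp (- \<zeta> * \<omega> n)) \<le> P n t1 t2 / F n t1 t2"
      "P n t1 t2 / F n t1 t2 \<le> ratio_upper (DIM('a) - 1) (exp (- \<zeta> * \<omega> n))"
      unfolding P_def F_def by (intro pair_probability_ratio_bounds[OF d2 zeta _ refl]; simp)+
    with n show "\<bar>P n t1 t2 / F n t1 t2 - 1\<bar> \<le> \<epsilon>" by (simp add: abs_le_iff)
  qed
qed

end
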